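(* Let $F=A^\sharp\circ B\circ P$, with $A\in\mathbb{T}^{m\times n}$ having at least one finite entry per column, $B\in\mathbb{T}^{m\times q}$ having at least one finite entry per row, finite entries of $A,B$ integers, and $P\in\mathbb{R}^{q\times n}$ row-stochastic with $P_{il}=Q_{il}/M$ for integers $Q_{il}$ and a positive integer $M$. Suppose $F$ has a bias vector and $\rho(F)\ne0$. Consider value iteration: $u^0=0$, $u^{\ell+1}=F(u^\ell)$, continued while $\max_i u^\ell_i\ge0$ and $\min_i u^\ell_i\le 0$, stopping at the first index $N$ where this fails, and answering "Player Min wins" if $\max_i u^N_i<0$, "Player Max wins" otherwise. Then \[ N\le 10\,n^3\,W\,M^{2\min\{k,n-1\}}, \] and the answer is correct ("Player Min wins" iff $\rho(F)<0$).
   Context: $\mathbb{T}=\mathbb{R}\cup\{-\infty\}$. For $C\in\mathbb{T}^{r\times s}$: $(C\odot z)_i=\max_j(C_{ij}+z_j)$; $C^\sharp(y)_j=\min_i(-C_{ij}+y_i)$ with $(+\infty)+(-\infty)=+\infty$; $Pz$ is the usual product with $0\cdot(-\infty)=0$; $F(x)=A^\sharp(B\odot(Px))$. $W=\max\{|A_{ij}-B_{ih}|: A_{ij}\ne-\infty,\ B_{ih}\ne-\infty\}$. $k$ is the number of nondeterministic states, a state $i\in[q]$ being nondeterministic if $P_{il}>0$ and $P_{il'}>0$ for some $l\ne l'$. A bias vector is $v\in\mathbb{R}^n$ with $F(v)=\lambda+v$ for some $\lambda\in\mathbb{R}$; this $\lambda=\rho(F)$ is unique (ergodic constant). *)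

theory Defs
  imports "HOL-Library.Extended_Real"
begin

text \<open>Tropical semiring T = R \<union> {-\<infinity>} is represented inside ereal; entries are
  assumed to lie in T (never +\<infinity>).\<close>

definition trop_mv :: "nat \<Rightarrow> (nat \<Rightarrow> nat \<Rightarrow> ereal) \<Rightarrow> (nat \<Rightarrow> ereal) \<Rightarrow> nat \<Rightarrow> ereal" where
  "trop_mv s C z i = Max ((\<lambda>j. C i j + z j) ` {..<s})"

text \<open>C^sharp(y)_j = min_{i<r} (-C_ij + y_i) with (+\<infinity>) + (-\<infinity>) = +\<infinity>,
  for C with r rows.\<close>
definition trop_sharp :: "nat \<Rightarrow> (nat \<Rightarrow> nat \<Rightarrow> ereal) \<Rightarrow> (nat \<Rightarrow> ereal) \<Rightarrow> nat \<Rightarrow> ereal" where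
  "trop_sharp r C y j = Min ((\<lambda>i. if C i j = -\<infinity> then \<infinity> else - C i j + y i) ` {..<r})"

definition mat_vec :: "nat \<Rightarrow> (nat \<Rightarrow> nat \<Rightarrow> real) \<Rightarrow> (nat \<Rightarrow> real) \<Rightarrow> nat \<Rightarrow> real" where
  "mat_vec n P z i = (\<Sum>l<n. P i l * z l)"

definition shapley :: "nat \<Rightarrow> nat \<Rightarrow> nat \<Rightarrow> (nat \<Rightarrow> nat \<Rightarrow> ereal) \<Rightarrow> (nat \<Rightarrow> nat \<Rightarrow> ereal)
    \<Rightarrow> (nat \<Rightarrow> nat \<Rightarrow> real) \<Rightarrow> (nat \<Rightarrow> real) \<Rightarrow> nat \<Rightarrow> real" where
  "shapley m n q A B P x =
     (\<lambda>j. real_of_ereal (trop_sharp m A (trop_mv q B (\<lambda>h. ereal (mat_vec n P x h))) j))"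

definition weight_W :: "nat \<Rightarrow> nat \<Rightarrow> nat \<Rightarrow> (nat \<Rightarrow> nat \<Rightarrow> ereal) \<Rightarrow> (nat \<Rightarrow> nat \<Rightarrow> ereal) \<Rightarrow> real" where
  "weight_W m n q A B = Max {\<bar>real_of_ereal (A i j) - real_of_ereal (B i h)\<bar> | i j h.
      i < m \<and> j < n \<and> h < q \<and> A i j \<noteq> -\<infinity> \<and> B i h \<noteq> -\<infinity>}"

definition num_nondet :: "nat \<Rightarrow> nat \<Rightarrow> (nat \<Rightarrow> nat \<Rightarrow> real) \<Rightarrow> nat" where
  "num_nondet q n P = card {i. i < q \<and> (\<exists>l l'. l < n \<and> l' < n \<and> l \<noteq> l' \<and> P i l > 0 \<and> P i l' > 0)}"

definition is_bias :: "nat \<Rightarrow> ((nat \<Rightarrow> real) \<Rightarrow> nat \<Rightarrow> real) \<Rightarrow> real \<Rightarrow> (nat \<Rightarrow> real) \<Rightarrow> bool" where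
  "is_bias n F lam v \<longleftrightarrow> (\<forall>j<n. F v j = lam + v j)"

definition has_bias :: "nat \<Rightarrow> ((nat \<Rightarrow> real) \<Rightarrow> nat \<Rightarrow> real) \<Rightarrow> bool" where
  "has_bias n F \<longleftrightarrow> (\<exists>lam v. is_bias n F lam v)"

text \<open>Ergodic constant rho(F) (unique when a bias vector exists).\<close>
definition ergodic_const :: "nat \<Rightarrow> ((nat \<Rightarrow> real) \<Rightarrow> nat \<Rightarrow> real) \<Rightarrow> real" where
  "ergodic_const n F = (THE lam. \<exists>v. is_bias n F lam v)"

definition value_iter :: "((nat \<Rightarrow> real) \<Rightarrow> nat \<Rightarrow> real) \<Rightarrow> nat \<Rightarrow> nat \<Rightarrow> real" where
  "value_iter F l = (F ^^ l) (\<lambda>_. 0)"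

definition vi_continue :: "nat \<Rightarrow> ((nat \<Rightarrow> real) \<Rightarrow> nat \<Rightarrow> real) \<Rightarrow> nat \<Rightarrow> bool" where
  "vi_continue n F l \<longleftrightarrow>
     Max ((value_iter F l) ` {..<n}) \<ge> 0 \<and> Min ((value_iter F l) ` {..<n}) \<le> 0"

definition vi_stop :: "nat \<Rightarrow> ((nat \<Rightarrow> real) \<Rightarrow> nat \<Rightarrow> real) \<Rightarrow> nat" where
  "vi_stop n F = (LEAST l. \<not> vi_continue n F l)"

definition vi_answer_min_wins :: "nat \<Rightarrow> ((nat \<Rightarrow> real) \<Rightarrow> nat \<Rightarrow> real) \<Rightarrow> bool" where
  "vi_answer_min_wins n F \<longleftrightarrow> Max ((value_iter F (vi_stop n F)) ` {..<n}) < 0"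

end

theory Submission
  imports Defs "Jordan_Normal_Form.Determinant"
begin

text \<open>
  Value iteration tracks the ergodic constant: \<open>\<bar>u\<^sup>k - k lam\<bar>\<close> stays below the spread of a
  bias vector, so the algorithm answers correctly once an iterate has a strict sign. For the
  stopping time, fix an optimal strategy of one player at the bias vector; the greatest
  subsolution of the remaining one-player game, explored layer by layer along tight actions,
  yields a sub- or supereigenvector \<open>w\<close> of \<open>F\<close> with \<open>|w| \<le> (n - 1)(W + |lam|) M\<^sup>\<kappa>\<close>,
  where \<open>\<kappa> = min k (n - 1)\<close>; hence the iterates have a strict sign after about \<open>|w| / |lam|\<close>
  steps. Finally \<open>|lam| \<ge> 1 / (n M\<^sup>\<kappa>)\<close>: \<open>lam\<close> is the gain of the Markov chain induced by
  optimal strategies, an average of integer payments against a stationary distribution whose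
  denominators Cramer's rule bounds by \<open>M\<^sup>\<kappa>\<close>, since only nondeterministic rows of \<open>P\<close>
  are fractional.
\<close>

section \<open>Stationary distributions of rational Markov chains\<close>

definition id_minus_mat :: "nat \<Rightarrow> (nat \<Rightarrow> nat \<Rightarrow> real) \<Rightarrow> real mat" where
  "id_minus_mat d K = mat d d (\<lambda>(i,j). (if i = j then 1 else 0) - K i j)"

lemma id_minus_mat_carrier [simp]: "id_minus_mat d K \<in> carrier_mat d d"
  unfolding id_minus_mat_def by auto

lemma id_minus_mat_dim [simp]:
  "dim_row (id_minus_mat d K) = d" "dim_col (id_minus_mat d K) = d"
  unfolding id_minus_mat_def by auto

lemma id_minus_mat_index [simp]:
  "i < d \<Longrightarrow> j < d \<Longrightarrow> id_minus_mat d K $$ (i,j) = (if i = j then 1 else 0) - K i j"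
  unfolding id_minus_mat_def by auto

lemma det_eq_0_if_zero_row:
  fixes A :: "'a::comm_ring_1 mat"
  assumes A: "A \<in> carrier_mat d d" and e: "e < d" and zero: "\<And>j. j < d \<Longrightarrow> A $$ (e,j) = 0"
  shows "det A = 0"
proof -
  have "(\<Prod>i = 0..<d. A $$ (i, p i)) = 0" if p: "p permutes {0..<d}" for p
  proof -
    have "p e < d" using p e by (simp add: permutes_in_image)
    hence "A $$ (e, p e) = 0" using zero by simp
    thus ?thesis using e by (intro prod_zero) auto
  qed
  thus ?thesis unfolding det_def'[OF A] by (intro sum.neutral) auto
qed

text \<open>One step of Gaussian elimination: clearing the last column of \<open>I - K\<close> by row operations
  leaves \<open>(1 - K e e)\<close> times \<open>I - K'\<close>, where \<open>K'\<close> is the chain watched outside state \<open>e\<close>.\<close>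

lemma det_id_minus_mat_eliminate:
  assumes t: "K e e \<noteq> 1"
  shows "det (id_minus_mat (Suc e) K)
    = (1 - K e e) * det (id_minus_mat e (\<lambda>i j. K i j + K i e * K e j / (1 - K e e)))"
proof -
  let ?d = "Suc e" and ?t = "K e e" and ?A = "id_minus_mat (Suc e) K"
  define E where "E = mat ?d ?d (\<lambda>(i,j). if i = j then 1
      else if j = e \<and> i < e then K i e / (1 - ?t) else (0::real))"
  have Ec: "E \<in> carrier_mat ?d ?d" unfolding E_def by auto
  have "upper_triangular E" unfolding E_def by (intro upper_triangularI) auto
  hence "det E = prod_list (diag_mat E)" using det_upper_triangular Ec by blast
  also have "\<dots> = 1" unfolding prod_list_diag_prod by (intro prod.neutral) (auto simp: E_def)
  finally have detE: "det E = 1" .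
  define B where "B = E * ?A"
  have Bc: "B \<in> carrier_mat ?d ?d" unfolding B_def using Ec by auto
  have detB: "det B = det ?A" unfolding B_def using det_mult[OF Ec id_minus_mat_carrier] detE by simp
  have B_index: "B $$ (i,j) = ?A $$ (i,j) + (if i < e then K i e / (1 - ?t) * ?A $$ (e,j) else 0)"
    if ij: "i < ?d" "j < ?d" for i j
  proof -
    have "B $$ (i,j) = (\<Sum>k<?d. E $$ (i,k) * ?A $$ (k,j))"
      unfolding B_def using ij Ec
      by (auto simp: scalar_prod_def lessThan_atLeast0 intro!: sum.cong)
    also have "\<dots> = (\<Sum>k<?d. (if k = i then ?A $$ (k,j) else 0)
        + (if k = e \<and> i < e then K i e / (1 - ?t) * ?A $$ (k,j) else 0))"
      using ij by (intro sum.cong) (auto simp: E_def)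
    also have "\<dots> = ?A $$ (i,j) + (if i < e then K i e / (1 - ?t) * ?A $$ (e,j) else 0)"
      using ij by (simp add: sum.distrib)
    finally show ?thesis .
  qed
  have B_last_col: "B $$ (i,e) = (if i = e then 1 - ?t else 0)" if "i < ?d" for i
    using B_index[of i e] that t by (auto simp: field_simps)
  have "det B = (\<Sum>i<?d. B $$ (i,e) * cofactor B i e)"
    using laplace_expansion_column[OF Bc] by auto
  also have "\<dots> = (\<Sum>i<?d. if i = e then (1 - ?t) * cofactor B e e else 0)"
    by (intro sum.cong) (auto simp: B_last_col)
  also have "\<dots> = (1 - ?t) * det (mat_delete B e e)" by (simp add: cofactor_def)
  also have "mat_delete B e e = id_minus_mat e (\<lambda>i j. K i j + K i e * K e j / (1 - ?t))"
  proof (rule eq_matI)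
    fix i j assume "i < dim_row (id_minus_mat e (\<lambda>i j. K i j + K i e * K e j / (1 - ?t)))"
      "j < dim_col (id_minus_mat e (\<lambda>i j. K i j + K i e * K e j / (1 - ?t)))"
    hence ij: "i < e" "j < e" by auto
    have "mat_delete B e e $$ (i,j) = B $$ (i,j)" using ij Bc unfolding mat_delete_def by auto
    thus "mat_delete B e e $$ (i,j) = id_minus_mat e (\<lambda>i j. K i j + K i e * K e j / (1 - ?t)) $$ (i,j)"
      using ij B_index[of i j] by (simp add: field_simps)
  qed (use Bc in auto)
  finally show ?thesis using detB by simp
qed

lemma det_id_minus_mat_bounds:
  assumes "\<And>i j. i < d \<Longrightarrow> j < d \<Longrightarrow> K i j \<ge> 0"
    and "\<And>i. i < d \<Longrightarrow> (\<Sum>j<d. K i j) \<le> 1"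
  shows "0 \<le> det (id_minus_mat d K) \<and> det (id_minus_mat d K) \<le> 1"
  using assms
proof (induction d arbitrary: K)
  case 0
  then show ?case by (simp add: det_dim_zero)
next
  case (Suc e)
  let ?t = "K e e"
  have row_e: "(\<Sum>j<e. K e j) \<le> 1 - ?t" using Suc.prems(2)[of e] by simp
  have row_e_nonneg: "(\<Sum>j<e. K e j) \<ge> 0" using Suc.prems(1) by (intro sum_nonneg) auto
  show ?case
  proof (cases "?t < 1")
    case False
    hence "?t = 1" and "(\<Sum>j<e. K e j) = 0" using row_e row_e_nonneg by linarith+
    hence "\<forall>j<e. K e j = 0" using Suc.prems(1) sum_nonneg_eq_0_iff[of "{..<e}" "K e"] by auto
    hence "det (id_minus_mat (Suc e) K) = 0"
      using \<open>?t = 1\<close> by (intro det_eq_0_if_zero_row[of _ "Suc e" e]) (auto simp: less_Suc_eq)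
    then show ?thesis by simp
  next
    case True
    define K' where "K' i j = K i j + K i e * K e j / (1 - ?t)" for i j
    have "K' i j \<ge> 0" if "i < e" "j < e" for i j
      using Suc.prems(1) that True unfolding K'_def
      by (auto intro!: add_nonneg_nonneg divide_nonneg_pos)
    moreover have "(\<Sum>j<e. K' i j) \<le> 1" if i: "i < e" for i
    proof -
      have "(\<Sum>j<e. K' i j) = (\<Sum>j<e. K i j) + K i e / (1 - ?t) * (\<Sum>j<e. K e j)"
        unfolding K'_def by (simp add: sum.distrib sum_distrib_left)
      also have "\<dots> \<le> (\<Sum>j<e. K i j) + K i e / (1 - ?t) * (1 - ?t)"
        using row_e i Suc.prems(1)[of i e] True by (intro add_left_mono mult_left_mono) auto
      also have "\<dots> = (\<Sum>j<Suc e. K i j)" using True by simp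
      also have "\<dots> \<le> 1" using Suc.prems(2) i by auto
      finally show ?thesis .
    qed
    ultimately have "0 \<le> det (id_minus_mat e K') \<and> det (id_minus_mat e K') \<le> 1"
      using Suc.IH by blast
    moreover have "det (id_minus_mat (Suc e) K) = (1 - ?t) * det (id_minus_mat e K')"
      unfolding K'_def using True by (intro det_id_minus_mat_eliminate) simp
    moreover have "?t \<ge> 0" using Suc.prems(1) by auto
    ultimately show ?thesis using True by (auto intro: mult_nonneg_nonneg mult_le_one)
  qed
qed

lemma mat_delete_id_minus_mat:
  assumes "x < d"
  shows "mat_delete (id_minus_mat d K) x x
    = id_minus_mat (d - 1) (\<lambda>i j. K (insert_index x i) (insert_index x j))"
  using assms by (intro eq_matI) (auto simp: mat_delete_def insert_index_def)

lemma sum_lessThan_insert_index: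
  assumes "x < d"
  shows "(\<Sum>z<d. g z) = g x + (\<Sum>i<d - 1. g (insert_index x i))"
proof -
  have "(\<Sum>z<d. g z) = g x + (\<Sum>z\<in>{0..<d} - {x}. g z)"
    using assms by (subst sum.remove[of _ x]) (auto simp: lessThan_atLeast0)
  also have "{0..<d} - {x} = insert_index x ` {0..<d - 1}"
    using insert_index_image[of x "d - 1"] assms by simp
  also have "(\<Sum>z\<in>insert_index x ` {0..<d - 1}. g z) = (\<Sum>i<d - 1. g (insert_index x i))"
    by (subst sum.reindex[OF insert_index_inj_on]) (simp add: lessThan_atLeast0)
  finally show ?thesis .
qed

lemma card_insert_index_preimage:
  assumes "x < d" "S \<subseteq> {..<d}"
  shows "card {i. i < d - 1 \<and> insert_index x i \<in> S} = card (S - {x})"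
proof (rule bij_betw_same_card, rule bij_betwI')
  show "(insert_index x i = insert_index x j) = (i = j)" for i j
    unfolding insert_index_def by auto
  show "insert_index x i \<in> S - {x}" if "i \<in> {i. i < d - 1 \<and> insert_index x i \<in> S}" for i
    using that insert_index_exclude[of x i] by blast
  show "\<exists>i\<in>{i. i < d - 1 \<and> insert_index x i \<in> S}. z = insert_index x i" if z: "z \<in> S - {x}" for z
  proof (cases "z < x")
    case True then show ?thesis using z assms by (intro bexI[of _ z]) (auto simp: insert_index_def)
  next
    case False then show ?thesis using z assms by (intro bexI[of _ "z - 1"]) (auto simp: insert_index_def)
  qed
qed

lemma sum_id_minus_row:
  fixes g :: "nat \<Rightarrow> real"
  assumes "y < d"
  shows "(\<Sum>w<d. ((if y = w then 1 else 0) - K y w) * g w) = g y - (\<Sum>w<d. K y w * g w)"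
proof -
  have "(\<Sum>w<d. ((if y = w then 1 else 0) - K y w) * g w)
      = (\<Sum>w<d. if y = w then g w else 0) - (\<Sum>w<d. K y w * g w)"
    by (subst sum_subtractf[symmetric]) (auto intro: sum.cong simp: left_diff_distrib)
  thus ?thesis using assms by simp
qed

lemma sum_id_minus_col:
  fixes g :: "nat \<Rightarrow> real"
  assumes "z < d"
  shows "(\<Sum>x<d. g x * ((if x = z then 1 else 0) - K x z)) = g z - (\<Sum>x<d. g x * K x z)"
proof -
  have "(\<Sum>x<d. g x * ((if x = z then 1 else 0) - K x z))
      = (\<Sum>x<d. if x = z then g x else 0) - (\<Sum>x<d. g x * K x z)"
    by (subst sum_subtractf[symmetric]) (auto intro: sum.cong simp: right_diff_distrib)
  thus ?thesis using assms by simp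
qed

lemma det_Ints_if_scaled_rows_Ints:
  fixes B :: "real mat" and M :: int
  assumes B: "B \<in> carrier_mat d d" and S: "S \<subseteq> {..<d}"
    and scaled: "\<And>i j. i \<in> S \<Longrightarrow> j < d \<Longrightarrow> real_of_int M * B $$ (i,j) \<in> \<int>"
    and integral: "\<And>i j. i < d \<Longrightarrow> i \<notin> S \<Longrightarrow> j < d \<Longrightarrow> B $$ (i,j) \<in> \<int>"
  shows "real_of_int M ^ card S * det B \<in> \<int>"
proof -
  let ?s = "\<lambda>i. if i \<in> S then real_of_int M else 1"
  have "real_of_int M ^ card S = (\<Prod>i \<in> {0..<d} \<inter> S. real_of_int M)"
    using S by (simp add: Int_absorb1 lessThan_atLeast0)
  also have "\<dots> = (\<Prod>i = 0..<d. ?s i)" by (simp add: prod.If_cases)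
  finally have "real_of_int M ^ card S * det B
      = (\<Sum>p | p permutes {0..<d}. of_int (sign p) * (\<Prod>i = 0..<d. ?s i * B $$ (i, p i)))"
    unfolding det_def'[OF B] sum_distrib_left
    by (intro sum.cong refl) (simp add: prod.distrib ac_simps)
  also have "\<dots> \<in> \<int>"
  proof (rule Ints_sum, rule Ints_mult)
    fix p assume p: "p \<in> {p. p permutes {0..<d}}"
    have "?s i * B $$ (i, p i) \<in> \<int>" if "i \<in> {0..<d}" for i
    proof -
      have "p i < d" "i < d" using p that by (auto simp: permutes_in_image)
      thus ?thesis using scaled integral by auto
    qed
    thus "(\<Prod>i = 0..<d. ?s i * B $$ (i, p i)) \<in> \<int>" by (rule Ints_prod)
  qed simp
  finally show ?thesis .
qed

lemma minor_id_minus_mat_scaled_Ints: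
  fixes K :: "nat \<Rightarrow> nat \<Rightarrow> real" and M :: int
  assumes x: "x < d" and S: "S \<subseteq> {..<d}"
    and scaled: "\<And>y z. y \<in> S \<Longrightarrow> z < d \<Longrightarrow> real_of_int M * K y z \<in> \<int>"
    and integral: "\<And>y z. y < d \<Longrightarrow> y \<notin> S \<Longrightarrow> z < d \<Longrightarrow> K y z \<in> \<int>"
  shows "real_of_int M ^ card (S - {x}) * det (mat_delete (id_minus_mat d K) x x) \<in> \<int>"
proof -
  let ?S = "{i. i < d - 1 \<and> insert_index x i \<in> S}"
  have idx: "insert_index x i < d" if "i < d - 1" for i
    using that x by (auto simp: insert_index_def)
  have "real_of_int M ^ card ?S
      * det (id_minus_mat (d - 1) (\<lambda>i j. K (insert_index x i) (insert_index x j))) \<in> \<int>"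
  proof (rule det_Ints_if_scaled_rows_Ints)
    fix i j assume "i \<in> ?S" "j < d - 1"
    thus "real_of_int M * id_minus_mat (d - 1) (\<lambda>i j. K (insert_index x i) (insert_index x j)) $$ (i, j) \<in> \<int>"
      using scaled idx by (auto simp: right_diff_distrib)
  next
    fix i j assume "i < d - 1" "i \<notin> ?S" "j < d - 1"
    thus "id_minus_mat (d - 1) (\<lambda>i j. K (insert_index x i) (insert_index x j)) $$ (i, j) \<in> \<int>"
      using integral idx by auto
  qed auto
  thus ?thesis
    unfolding mat_delete_id_minus_mat[OF x] card_insert_index_preimage[OF x S] .
qed

definition support_graph :: "nat \<Rightarrow> (nat \<Rightarrow> nat \<Rightarrow> real) \<Rightarrow> (nat \<times> nat) set" where
  "support_graph d K = {(x,z). x < d \<and> z < d \<and> K x z > 0}"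

lemma harmonic_max_along_path:
  fixes K :: "nat \<Rightarrow> nat \<Rightarrow> real"
  assumes nonneg: "\<And>x z. x < d \<Longrightarrow> z < d \<Longrightarrow> K x z \<ge> 0"
    and rows: "\<And>x. x < d \<Longrightarrow> x \<noteq> c \<Longrightarrow> (\<Sum>z<d. K x z) = 1"
    and harmonic: "\<And>x. x < d \<Longrightarrow> x \<noteq> c \<Longrightarrow> u x = (\<Sum>z<d. K x z * u z)"
    and ub: "\<And>z. z < d \<Longrightarrow> u z \<le> mx"
    and path: "(y, c) \<in> (support_graph d K)\<^sup>*" and uy: "u y = mx"
  shows "u c = mx"
  using path uy
proof (induction rule: converse_rtrancl_induct)
  case base
  then show ?case by simp
next
  case (step y y')
  show ?case
  proof (cases "y = c")
    case True
    then show ?thesis using step by simp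
  next
    case False
    have y: "y < d" "y' < d" "K y y' > 0" using step(1) unfolding support_graph_def by auto
    have "(\<Sum>z<d. K y z * (mx - u z)) = mx * (\<Sum>z<d. K y z) - (\<Sum>z<d. K y z * u z)"
      by (simp add: algebra_simps sum_subtractf sum_distrib_left)
    also have "\<dots> = 0" using rows[OF y(1) False] harmonic[OF y(1) False] step(4) by simp
    finally have sum0: "(\<Sum>z<d. K y z * (mx - u z)) = 0" .
    have "\<forall>z\<in>{..<d}. K y z * (mx - u z) = 0"
      using iffD1[OF sum_nonneg_eq_0_iff sum0] nonneg y(1) ub by (auto intro!: mult_nonneg_nonneg)
    hence "u y' = mx" using y by force
    then show ?thesis using step(3) by simp
  qed
qed

lemma harmonic_constant:
  fixes K :: "nat \<Rightarrow> nat \<Rightarrow> real"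
  assumes nonneg: "\<And>x z. x < d \<Longrightarrow> z < d \<Longrightarrow> K x z \<ge> 0"
    and rows: "\<And>x. x < d \<Longrightarrow> x \<noteq> c \<Longrightarrow> (\<Sum>z<d. K x z) = 1"
    and harmonic: "\<And>x. x < d \<Longrightarrow> x \<noteq> c \<Longrightarrow> u x = (\<Sum>z<d. K x z * u z)"
    and reach: "\<And>y. y < d \<Longrightarrow> (y, c) \<in> (support_graph d K)\<^sup>*"
    and c: "c < d" and z: "z < d"
  shows "u z = u c"
proof -
  have fin: "finite (u ` {..<d})" "u ` {..<d} \<noteq> {}" using c by auto
  obtain y1 where y1: "y1 < d" "u y1 = Max (u ` {..<d})" using Max_in[OF fin] by auto
  have max: "u c = Max (u ` {..<d})"
    using fin by (intro harmonic_max_along_path[OF nonneg rows harmonic _ reach[OF y1(1)] y1(2)]) auto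
  obtain y2 where y2: "y2 < d" "u y2 = Min (u ` {..<d})" using Min_in[OF fin] by auto
  have harmonic_neg: "- u x = (\<Sum>z<d. K x z * - u z)" if "x < d" "x \<noteq> c" for x
    using harmonic[OF that] by (simp add: sum_negf)
  have min: "- u c = - Min (u ` {..<d})"
    using fin y2(2)
    by (intro harmonic_max_along_path[OF nonneg rows harmonic_neg _ reach[OF y2(1)]]) auto
  have "Min (u ` {..<d}) \<le> u z" "u z \<le> Max (u ` {..<d})" using fin z by auto
  thus ?thesis using max min by linarith
qed

lemma closed_class_exists:
  assumes X0: "finite X0" "X0 \<noteq> {}" and closed: "\<And>x z. (x,z) \<in> R \<Longrightarrow> x \<in> X0 \<Longrightarrow> z \<in> X0"
  obtains C c where "c \<in> C" "C \<subseteq> X0" "\<And>x z. x \<in> C \<Longrightarrow> (x,z) \<in> R\<^sup>* \<Longrightarrow> z \<in> C"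
    "\<And>x. x \<in> C \<Longrightarrow> (x,c) \<in> R\<^sup>*"
proof -
  have in_X0: "z \<in> X0" if "(x,z) \<in> R\<^sup>*" "x \<in> X0" for x z
    using that by (induction rule: rtrancl_induct) (auto intro: closed)
  have fin: "finite (R\<^sup>* `` {x})" if "x \<in> X0" for x
    using in_X0[OF _ that] X0(1) by (auto intro: finite_subset)
  obtain x1 where "x1 \<in> X0" using X0 by auto
  then obtain c where c: "c \<in> X0" and least: "\<And>x. x \<in> X0 \<Longrightarrow> card (R\<^sup>* `` {c}) \<le> card (R\<^sup>* `` {x})"
    using ex_has_least_nat[of "\<lambda>x. x \<in> X0" x1 "\<lambda>x. card (R\<^sup>* `` {x})"] by auto
  define C where "C = R\<^sup>* `` {c}"
  have closedC: "z \<in> C" if "x \<in> C" "(x,z) \<in> R\<^sup>*" for x z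
    using that unfolding C_def by auto
  have CX0: "C \<subseteq> X0" unfolding C_def using in_X0 c by auto
  have "(x,c) \<in> R\<^sup>*" if x: "x \<in> C" for x
  proof -
    have "R\<^sup>* `` {x} \<subseteq> C" using closedC x by auto
    moreover have "card C \<le> card (R\<^sup>* `` {x})" unfolding C_def using least CX0 x by auto
    ultimately have "R\<^sup>* `` {x} = C" using card_seteq fin[OF c] unfolding C_def by blast
    thus ?thesis unfolding C_def by auto
  qed
  moreover have "c \<in> C" unfolding C_def by auto
  ultimately show thesis using that CX0 closedC by blast
qed

locale rooted_chain =
  fixes d :: nat and K :: "nat \<Rightarrow> nat \<Rightarrow> real" and c :: nat
  assumes nonneg: "\<And>x z. x < d \<Longrightarrow> z < d \<Longrightarrow> K x z \<ge> 0"
    and stochastic: "\<And>x. x < d \<Longrightarrow> (\<Sum>z<d. K x z) = 1"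
    and root: "c < d"
    and reaches_root: "\<And>x. x < d \<Longrightarrow> (x, c) \<in> (support_graph d K)\<^sup>*"
begin

definition minor :: "nat \<Rightarrow> real" where
  "minor x = det (mat_delete (id_minus_mat d K) x x)"

lemma harmonic_eq_root:
  "(\<And>x. x < d \<Longrightarrow> x \<noteq> c \<Longrightarrow> u x = (\<Sum>z<d. K x z * u z)) \<Longrightarrow> z < d \<Longrightarrow> u z = u c"
  using harmonic_constant[OF nonneg stochastic _ reaches_root root] by blast

lemma det_id_minus_mat_eq_0: "det (id_minus_mat d K) = 0"
proof -
  have "id_minus_mat d K *\<^sub>v vec d (\<lambda>_. 1) = 0\<^sub>v d"
  proof (rule eq_vecI)
    fix i assume "i < dim_vec (0\<^sub>v d :: real vec)"
    hence i: "i < d" by simp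
    have "(id_minus_mat d K *\<^sub>v vec d (\<lambda>_. 1)) $ i = (\<Sum>j<d. (if i = j then 1 else 0) - K i j)"
      using i by (auto simp: scalar_prod_def lessThan_atLeast0 intro!: sum.cong)
    also have "\<dots> = 0" using stochastic[OF i] i by (simp add: sum_subtractf)
    finally show "(id_minus_mat d K *\<^sub>v vec d (\<lambda>_. 1)) $ i = 0\<^sub>v d $ i" using i by simp
  qed simp
  moreover have "vec d (\<lambda>_. 1) \<noteq> (0\<^sub>v d :: real vec)"
    using root by (metis index_vec index_zero_vec(1) zero_neq_one)
  ultimately show ?thesis
    using det_0_iff_vec_prod_zero_field[OF id_minus_mat_carrier] vec_carrier by blast
qed

text \<open>Since \<open>(I - K) adj(I - K) = 0\<close>, each row of cofactors is harmonic, hence constant.\<close>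

lemma cofactor_id_minus_mat:
  assumes x: "x < d" and z: "z < d"
  shows "cofactor (id_minus_mat d K) x z = minor x"
proof -
  let ?A = "id_minus_mat d K"
  define g where "g y = cofactor ?A x y" for y
  have adj: "adj_mat ?A \<in> carrier_mat d d" "?A * adj_mat ?A = det ?A \<cdot>\<^sub>m 1\<^sub>m d"
    using adj_mat[OF id_minus_mat_carrier] by auto
  have "g y = (\<Sum>w<d. K y w * g w)" if y: "y < d" for y
  proof -
    have "(\<Sum>w<d. ((if y = w then 1 else 0) - K y w) * g w) = (?A * adj_mat ?A) $$ (y,x)"
      using adj(1) y x
      by (auto simp: scalar_prod_def lessThan_atLeast0 adj_mat_def g_def intro!: sum.cong)
    also have "\<dots> = 0" using adj(2) det_id_minus_mat_eq_0 y x by simp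
    finally show ?thesis using sum_id_minus_row[OF y] by simp
  qed
  hence "g z = g x" using harmonic_eq_root x z by metis
  thus ?thesis unfolding g_def minor_def cofactor_def by simp
qed

lemma minor_stationary:
  assumes z: "z < d"
  shows "(\<Sum>x<d. minor x * K x z) = minor z"
proof -
  have "(\<Sum>x<d. minor x * ((if x = z then 1 else 0) - K x z))
      = (\<Sum>x<d. id_minus_mat d K $$ (x,z) * cofactor (id_minus_mat d K) x z)"
    using z by (intro sum.cong) (auto simp: cofactor_id_minus_mat)
  also have "\<dots> = 0"
    using laplace_expansion_column[OF id_minus_mat_carrier z] det_id_minus_mat_eq_0 by simp
  finally show ?thesis using sum_id_minus_col[OF z] by simp
qed

lemma minor_bounds:
  assumes x: "x < d"
  shows "0 \<le> minor x \<and> minor x \<le> 1"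
  unfolding minor_def mat_delete_id_minus_mat[OF x]
proof (rule det_id_minus_mat_bounds)
  have idx: "insert_index x i < d" if "i < d - 1" for i
    using that x by (auto simp: insert_index_def)
  show "0 \<le> K (insert_index x i) (insert_index x j)" if "i < d - 1" "j < d - 1" for i j
    using nonneg idx that by auto
  show "(\<Sum>j<d - 1. K (insert_index x i) (insert_index x j)) \<le> 1" if i: "i < d - 1" for i
    using stochastic[OF idx[OF i]] sum_lessThan_insert_index[OF x, of "K (insert_index x i)"]
      nonneg[OF idx[OF i] x] by linarith
qed

text \<open>A kernel vector of the minor at the root, extended by \<open>0\<close> at \<open>c\<close>, is harmonic off \<open>c\<close>
  and therefore vanishes.\<close>

lemma minor_root_pos: "minor c > 0"
proof -
  let ?B = "id_minus_mat (d - 1) (\<lambda>i j. K (insert_index c i) (insert_index c j))"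
  have idx: "insert_index c i < d" if "i < d - 1" for i
    using that root by (auto simp: insert_index_def)
  have "det ?B \<noteq> 0"
  proof
    assume "det ?B = 0"
    then obtain u where u: "u \<in> carrier_vec (d - 1)" "u \<noteq> 0\<^sub>v (d - 1)" "?B *\<^sub>v u = 0\<^sub>v (d - 1)"
      using det_0_iff_vec_prod_zero_field[OF id_minus_mat_carrier] by auto
    have u_harmonic: "u $ i = (\<Sum>j<d - 1. K (insert_index c i) (insert_index c j) * u $ j)"
      if i: "i < d - 1" for i
    proof -
      have "(\<Sum>j<d - 1. ((if i = j then 1 else 0)
          - K (insert_index c i) (insert_index c j)) * u $ j) = (?B *\<^sub>v u) $ i"
        using u(1) i by (auto simp: scalar_prod_def lessThan_atLeast0 intro!: sum.cong)
      also have "\<dots> = 0" using u(3) i by simp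
      finally show ?thesis
        using sum_id_minus_row[OF i, of "\<lambda>i j. K (insert_index c i) (insert_index c j)" "\<lambda>j. u $ j"]
        by simp
    qed
    define w where "w y = (if y = c then 0 else u $ delete_index c y)" for y
    have w_ins: "w (insert_index c i) = u $ i" for i
      unfolding w_def by simp
    have w_harmonic: "w y = (\<Sum>z<d. K y z * w z)" if y: "y < d" "y \<noteq> c" for y
    proof -
      have y': "insert_index c (delete_index c y) = y" "delete_index c y < d - 1"
        using y root insert_delete_index[of y c] by (auto simp: delete_index_def)
      have "(\<Sum>z<d. K y z * w z) = (\<Sum>j<d - 1. K y (insert_index c j) * u $ j)"
        using sum_lessThan_insert_index[OF root, of "\<lambda>z. K y z * w z"] by (simp add: w_ins w_def)
      also have "\<dots> = w y"
        using u_harmonic[OF y'(2)] y' unfolding w_def using y by simp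
      finally show ?thesis ..
    qed
    have "w z = 0" if "z < d" for z using harmonic_eq_root[OF w_harmonic that] by (simp add: w_def)
    hence "u $ i = 0" if "i < d - 1" for i using w_ins[of i] idx[OF that] by simp
    hence "u = 0\<^sub>v (d - 1)" using u(1) by (intro eq_vecI) auto
    thus False using u(2) by simp
  qed
  thus ?thesis using minor_bounds[OF root]
    unfolding minor_def mat_delete_id_minus_mat[OF root] by simp
qed

end

text \<open>Redirecting every state outside a closed class \<open>C\<close> to a root \<open>c \<in> C\<close> gives a
  rooted chain; its principal minors then form a stationary vector of the original chain.\<close>

locale closed_class =
  fixes d :: nat and K :: "nat \<Rightarrow> nat \<Rightarrow> real" and C :: "nat set" and c :: nat
  assumes K_nonneg: "\<And>x z. x < d \<Longrightarrow> z < d \<Longrightarrow> K x z \<ge> 0"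
    and K_stochastic: "\<And>x. x < d \<Longrightarrow> (\<Sum>z<d. K x z) = 1"
    and C_subset: "C \<subseteq> {..<d}" and root_in: "c \<in> C"
    and C_closed: "\<And>x z. x \<in> C \<Longrightarrow> (x,z) \<in> (support_graph d K)\<^sup>* \<Longrightarrow> z \<in> C"
    and C_reaches: "\<And>x. x \<in> C \<Longrightarrow> (x,c) \<in> (support_graph d K)\<^sup>*"
begin

definition redirect :: "nat \<Rightarrow> nat \<Rightarrow> real" where
  "redirect x z = (if x \<in> C then K x z else if z = c then 1 else 0)"

lemma root_lt: "c < d"
  using C_subset root_in by auto

sublocale rooted_chain d redirect c
proof
  show "0 \<le> redirect x z" if "x < d" "z < d" for x z using K_nonneg that unfolding redirect_def by auto
  show "(\<Sum>z<d. redirect x z) = 1" if "x < d" for x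
    using K_stochastic[OF that] root_lt unfolding redirect_def by (cases "x \<in> C") auto
  show "c < d" by (fact root_lt)
  show "(x, c) \<in> (support_graph d redirect)\<^sup>*" if x: "x < d" for x
  proof (cases "x \<in> C")
    case True
    have "(x,y) \<in> (support_graph d redirect)\<^sup>*" if "(x,y) \<in> (support_graph d K)\<^sup>*" for y
      using that
    proof (induction rule: rtrancl_induct)
      case (step y z)
      have "y \<in> C" using C_closed step(1) True by blast
      hence "(y,z) \<in> support_graph d redirect" using step(2) unfolding support_graph_def redirect_def by auto
      then show ?case using step(3) by simp
    qed simp
    then show ?thesis using C_reaches[OF True] by blast
  next
    case False
    hence "(x,c) \<in> support_graph d redirect" using x root_lt unfolding support_graph_def redirect_def by auto
    thus ?thesis by auto
  qed
qed

lemma redirect_mass_C: "x < d \<Longrightarrow> (\<Sum>z\<in>C. redirect x z) = 1"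
proof (cases "x \<in> C")
  case True
  have "redirect x z = 0" if z: "z < d" "z \<notin> C" for z
  proof (rule ccontr)
    assume "redirect x z \<noteq> 0"
    hence "(x,z) \<in> support_graph d K"
      using K_nonneg[of x z] True z C_subset unfolding redirect_def support_graph_def by force
    thus False using C_closed[OF True] z by blast
  qed
  moreover assume "x < d"
  ultimately show ?thesis
    using stochastic sum.subset_diff[OF C_subset finite_lessThan, of "redirect x"] by simp
next
  case False
  thus ?thesis using root_in finite_subset[OF C_subset] unfolding redirect_def by (simp add: sum.delta)
qed

lemma minor_outside: "x < d \<Longrightarrow> x \<notin> C \<Longrightarrow> minor x = 0"
proof -
  have "(\<Sum>z\<in>C. minor z) = (\<Sum>z\<in>C. \<Sum>x<d. minor x * redirect x z)"
    using minor_stationary C_subset by (intro sum.cong) auto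
  also have "\<dots> = (\<Sum>x<d. minor x * (\<Sum>z\<in>C. redirect x z))"
    by (subst sum.swap) (simp add: sum_distrib_left)
  finally have "(\<Sum>z\<in>{..<d} - C. minor z) = 0"
    using redirect_mass_C sum.subset_diff[OF C_subset finite_lessThan, of minor] by simp
  hence "\<forall>z\<in>{..<d} - C. minor z = 0"
    using sum_nonneg_eq_0_iff[of "{..<d} - C" minor] minor_bounds by auto
  thus "x < d \<Longrightarrow> x \<notin> C \<Longrightarrow> minor x = 0" by auto
qed

lemma minor_stationary_original:
  assumes z: "z < d"
  shows "(\<Sum>x<d. minor x * K x z) = minor z"
proof -
  have "(\<Sum>x<d. minor x * K x z) = (\<Sum>x<d. minor x * redirect x z)"
    by (intro sum.cong) (auto simp: redirect_def minor_outside)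
  thus ?thesis using minor_stationary[OF z] by simp
qed

lemma minor_scaled_Ints:
  fixes M :: int
  assumes x: "x < d" and S: "S \<subseteq> {..<d}"
    and scaled: "\<And>y z. y \<in> S \<Longrightarrow> z < d \<Longrightarrow> real_of_int M * K y z \<in> \<int>"
    and integral: "\<And>y z. y < d \<Longrightarrow> y \<notin> S \<Longrightarrow> z < d \<Longrightarrow> K y z \<in> \<int>"
  shows "real_of_int M ^ card (C \<inter> S - {x}) * minor x \<in> \<int>"
  unfolding minor_def
  by (rule minor_id_minus_mat_scaled_Ints[OF x]) (use C_subset scaled integral in \<open>auto simp: redirect_def\<close>)

end

text \<open>Cramer's rule bounds the denominators of the minors: only rows in \<open>S\<close> contribute a
  factor \<open>M\<close>.\<close>

theorem stationary_vector_exists: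
  fixes K :: "nat \<Rightarrow> nat \<Rightarrow> real" and M :: int
  assumes K_nonneg: "\<And>x z. x < d \<Longrightarrow> z < d \<Longrightarrow> K x z \<ge> 0"
    and K_stochastic: "\<And>x. x < d \<Longrightarrow> (\<Sum>z<d. K x z) = 1"
    and X0: "X0 \<subseteq> {..<d}" "X0 \<noteq> {}"
    and closed: "\<And>x z. x \<in> X0 \<Longrightarrow> z < d \<Longrightarrow> K x z > 0 \<Longrightarrow> z \<in> X0"
    and S: "S \<subseteq> {..<d}"
    and scaled: "\<And>x z. x \<in> S \<Longrightarrow> z < d \<Longrightarrow> real_of_int M * K x z \<in> \<int>"
    and integral: "\<And>x z. x < d \<Longrightarrow> x \<notin> S \<Longrightarrow> z < d \<Longrightarrow> K x z \<in> \<int>"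
  obtains C \<psi> c where "C \<subseteq> X0" "c \<in> C" "\<psi> c > 0"
    "\<And>x. x < d \<Longrightarrow> 0 \<le> \<psi> x \<and> \<psi> x \<le> 1" "\<And>x. x < d \<Longrightarrow> x \<notin> C \<Longrightarrow> \<psi> x = 0"
    "\<And>z. z < d \<Longrightarrow> (\<Sum>x<d. \<psi> x * K x z) = \<psi> z"
    "\<And>x. x < d \<Longrightarrow> real_of_int M ^ card (C \<inter> S - {x}) * \<psi> x \<in> \<int>"
proof -
  have R_closed: "z \<in> X0" if "(x,z) \<in> support_graph d K" "x \<in> X0" for x z
    using that closed unfolding support_graph_def by auto
  show thesis
  proof (rule closed_class_exists[OF finite_subset[OF X0(1) finite_lessThan] X0(2) R_closed])
    fix C c assume C: "c \<in> C" "C \<subseteq> X0"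
      "\<And>x z. x \<in> C \<Longrightarrow> (x,z) \<in> (support_graph d K)\<^sup>* \<Longrightarrow> z \<in> C"
      "\<And>x. x \<in> C \<Longrightarrow> (x,c) \<in> (support_graph d K)\<^sup>*"
    interpret closed_class d K C c
      using C K_nonneg K_stochastic X0(1) by unfold_locales auto
    show thesis
      by (intro that[OF C(2,1) minor_root_pos minor_bounds minor_outside minor_stationary_original
            minor_scaled_Ints[OF _ S scaled integral]])
  qed
qed

section \<open>Value bounds for one-player games\<close>

definition nondet :: "nat \<Rightarrow> (nat \<Rightarrow> nat \<Rightarrow> real) \<Rightarrow> nat \<Rightarrow> bool" where
  "nondet n P h \<longleftrightarrow> (\<exists>l l'. l < n \<and> l' < n \<and> l \<noteq> l' \<and> P h l > 0 \<and> P h l' > 0)"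

lemma num_nondet_eq_card: "num_nondet q n P = card {h. h < q \<and> nondet n P h}"
  unfolding num_nondet_def nondet_def ..

locale stochastic_matrix =
  fixes n q :: nat and P :: "nat \<Rightarrow> nat \<Rightarrow> real"
  assumes P_nonneg: "\<And>h l. h < q \<Longrightarrow> l < n \<Longrightarrow> P h l \<ge> 0"
    and P_stoch: "\<And>h. h < q \<Longrightarrow> (\<Sum>l<n. P h l) = 1"
begin

abbreviation nondet_rows :: "nat set" where
  "nondet_rows \<equiv> {h. h < q \<and> nondet n P h}"

lemma P_le_1: "h < q \<Longrightarrow> l < n \<Longrightarrow> P h l \<le> 1"
  using member_le_sum[of l "{..<n}" "P h"] P_nonneg P_stoch by auto

lemma mat_vec_mono: "h < q \<Longrightarrow> (\<And>l. l < n \<Longrightarrow> x l \<le> y l) \<Longrightarrow> mat_vec n P x h \<le> mat_vec n P y h"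
  unfolding mat_vec_def using P_nonneg by (intro sum_mono mult_left_mono) auto

lemma mat_vec_add_const: "h < q \<Longrightarrow> mat_vec n P (\<lambda>l. x l + t) h = mat_vec n P x h + t"
  unfolding mat_vec_def using P_stoch
  by (simp add: distrib_left sum.distrib sum_distrib_right[symmetric])

lemma mat_vec_uminus: "mat_vec n P (\<lambda>l. - x l) h = - mat_vec n P x h"
  unfolding mat_vec_def by (simp add: sum_negf)

lemma mat_vec_le_Max: "h < q \<Longrightarrow> n > 0 \<Longrightarrow> mat_vec n P x h \<le> Max (x ` {..<n})"
  using mat_vec_mono[of h x "\<lambda>_. Max (x ` {..<n})"] mat_vec_add_const[of h "\<lambda>_. 0"]
  by (simp add: mat_vec_def)

lemma Min_le_mat_vec: "h < q \<Longrightarrow> n > 0 \<Longrightarrow> Min (x ` {..<n}) \<le> mat_vec n P x h"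
  using mat_vec_mono[of h "\<lambda>_. Min (x ` {..<n})" x] mat_vec_add_const[of h "\<lambda>_. 0"]
  by (simp add: mat_vec_def)

lemma mat_vec_ge_entry:
  assumes "h < q" "l < n" "\<And>l. l < n \<Longrightarrow> x l \<ge> 0"
  shows "mat_vec n P x h \<ge> P h l * x l"
  unfolding mat_vec_def using assms P_nonneg by (intro member_le_sum) auto

lemma deterministic_row:
  assumes h: "h < q" "\<not> nondet n P h" and l: "l < n" "P h l > 0"
  shows "P h l = 1"
proof -
  have "P h l' = 0" if "l' < n" "l' \<noteq> l" for l'
    using h P_nonneg[OF h(1) that(1)] that l unfolding nondet_def by force
  hence "(\<Sum>l'<n. P h l') = P h l" using l by (subst sum.remove[of _ l]) (auto intro!: sum.neutral)
  thus ?thesis using P_stoch[OF h(1)] by simp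
qed

lemma deterministic_row_Ints: "h < q \<Longrightarrow> \<not> nondet n P h \<Longrightarrow> l < n \<Longrightarrow> P h l \<in> \<int>"
  using deterministic_row[of h l] P_nonneg[of h l] by (cases "P h l > 0") auto

end

text \<open>A positive probability \<open>p \<ge> 1 / M\<close> shrinks the depth reached so far by at most \<open>1 / M\<close>.\<close>

lemma damped_step:
  fixes p X y z t b M :: real
  assumes "1 / M \<le> p" "p \<le> 1" "M > 0" "X \<ge> 0" "b \<ge> 0" "t \<ge> 0"
    and "X - t * b \<le> y" "- b + p * y \<le> z"
  shows "X / M - (t + 1) * b \<le> z"
proof -
  have "0 < 1 / M" using assms(3) by simp
  hence "p \<ge> 0" using assms(1) by linarith
  hence "p * (X - t * b) \<le> p * y" using assms(7) by (intro mult_left_mono)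
  moreover have "X / M \<le> p * X" using assms(1,4) mult_right_mono[of "1 / M" p X] by simp
  moreover have "p * (t * b) \<le> t * b" using assms(2,5,6) \<open>p \<ge> 0\<close> by (simp add: mult_left_le_one_le)
  ultimately show ?thesis using assms(8) by (simp add: algebra_simps)
qed

text \<open>A one-player game where at state \<open>j\<close> the player picks \<open>(c, h) \<in> Act j\<close>, pays \<open>c\<close>,
  and moves according to row \<open>h\<close> of \<open>P\<close>; all positive probabilities are at least \<open>1 / M\<close>.\<close>

locale min_game = stochastic_matrix +
  fixes Act :: "nat \<Rightarrow> (real \<times> nat) set" and M \<beta> :: real
  assumes n_pos: "n \<ge> 1"
    and Act_finite: "\<And>j. j < n \<Longrightarrow> finite (Act j)"
    and Act_nonempty: "\<And>j. j < n \<Longrightarrow> Act j \<noteq> {}"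
    and Act_row: "\<And>j c h. j < n \<Longrightarrow> (c,h) \<in> Act j \<Longrightarrow> h < q"
    and Act_cost: "\<And>j c h. j < n \<Longrightarrow> (c,h) \<in> Act j \<Longrightarrow> \<bar>c\<bar> \<le> \<beta>"
    and P_min: "\<And>h l. h < q \<Longrightarrow> l < n \<Longrightarrow> P h l > 0 \<Longrightarrow> P h l \<ge> 1 / M"
    and M_ge_1: "M \<ge> 1"
begin

definition bellman :: "(nat \<Rightarrow> real) \<Rightarrow> nat \<Rightarrow> real" where
  "bellman x j = Min ((\<lambda>(c,h). c + mat_vec n P x h) ` Act j)"

lemma beta_nonneg: "\<beta> \<ge> 0"
proof -
  obtain a where "a \<in> Act 0" using Act_nonempty[of 0] n_pos by auto
  thus ?thesis using Act_cost[of 0 "fst a" "snd a"] n_pos by auto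
qed

lemma bellman_le: "j < n \<Longrightarrow> (c,h) \<in> Act j \<Longrightarrow> bellman x j \<le> c + mat_vec n P x h"
  unfolding bellman_def using Act_finite by (intro Min_le) force+

lemma bellman_greatest:
  "j < n \<Longrightarrow> (\<And>c h. (c,h) \<in> Act j \<Longrightarrow> t \<le> c + mat_vec n P x h) \<Longrightarrow> t \<le> bellman x j"
  unfolding bellman_def using Act_finite Act_nonempty by (intro Min.boundedI) auto

lemma bellman_attained: "j < n \<Longrightarrow> \<exists>c h. (c,h) \<in> Act j \<and> bellman x j = c + mat_vec n P x h"
  using Min_in[of "(\<lambda>(c,h). c + mat_vec n P x h) ` Act j"] Act_finite Act_nonempty
  unfolding bellman_def by fastforce

lemma bellman_mono:
  assumes j: "j < n" and xy: "\<And>l. l < n \<Longrightarrow> x l \<le> y l"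
  shows "bellman x j \<le> bellman y j"
proof (rule bellman_greatest[OF j])
  fix c h assume a: "(c,h) \<in> Act j"
  have "bellman x j \<le> c + mat_vec n P x h" by (rule bellman_le[OF j a])
  also have "\<dots> \<le> c + mat_vec n P y h" using mat_vec_mono[OF Act_row[OF j a] xy] by simp
  finally show "bellman x j \<le> c + mat_vec n P y h" .
qed

lemma bellman_add_const:
  assumes j: "j < n"
  shows "bellman (\<lambda>l. x l + t) j = bellman x j + t"
proof (rule antisym)
  obtain c h where a: "(c,h) \<in> Act j" "bellman x j = c + mat_vec n P x h"
    using bellman_attained[OF j] by blast
  show "bellman (\<lambda>l. x l + t) j \<le> bellman x j + t"
    using bellman_le[OF j a(1), of "\<lambda>l. x l + t"] a mat_vec_add_const[OF Act_row[OF j a(1)]] by simp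
  show "bellman x j + t \<le> bellman (\<lambda>l. x l + t) j"
    using bellman_le[OF j] mat_vec_add_const[OF Act_row[OF j]] by (intro bellman_greatest[OF j]) force
qed

end

text \<open>Given a fixed point \<open>v\<close> of the Bellman operator, take the greatest subsolution \<open>w\<close>
  squeezed between \<open>v - max v\<close> and \<open>0\<close>. Its zero set \<open>X\<close> is nonempty, and every other state
  can reach \<open>X\<close> along tight actions. Following these actions layer by layer from \<open>X\<close>, each
  layer loses at most \<open>\<beta>\<close>, and the depth gained so far shrinks by a factor \<open>1 / M\<close> only
  at the first entry of a nondeterministic row; so \<open>-min w\<close> is bounded.\<close>

locale min_game_fixpoint = min_game +
  fixes v :: "nat \<Rightarrow> real"
  assumes fixpoint: "\<And>j. j < n \<Longrightarrow> bellman v j = v j"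
begin

definition subsolutions :: "(nat \<Rightarrow> real) set" where
  "subsolutions = {w. \<forall>j<n. w j \<le> bellman w j \<and> w j \<le> 0 \<and> v j - Max (v ` {..<n}) \<le> w j}"

definition wmax :: "nat \<Rightarrow> real" where
  "wmax j = (if j < n then Sup ((\<lambda>w. w j) ` subsolutions) else 0)"

lemma v_finite: "finite (v ` {..<n})" "v ` {..<n} \<noteq> {}"
  using n_pos by (auto simp: lessThan_empty_iff)

lemma shifted_fixpoint_subsolution: "(\<lambda>j. v j - Max (v ` {..<n})) \<in> subsolutions"
proof -
  have "bellman (\<lambda>j. v j - Max (v ` {..<n})) j = v j - Max (v ` {..<n})" if "j < n" for j
    using bellman_add_const[OF that, of v "- Max (v ` {..<n})"] fixpoint[OF that] by simp
  thus ?thesis unfolding subsolutions_def using v_finite by auto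
qed

lemma le_wmax: "w \<in> subsolutions \<Longrightarrow> j < n \<Longrightarrow> w j \<le> wmax j"
  unfolding wmax_def subsolutions_def by (auto intro!: cSup_upper bdd_aboveI[of _ 0])

lemma wmax_nonpos: "wmax j \<le> 0"
  using shifted_fixpoint_subsolution
  unfolding wmax_def subsolutions_def by (auto intro!: cSup_least)

lemma wmax_subsolution: "wmax \<in> subsolutions"
proof -
  have "wmax j \<le> bellman wmax j" if j: "j < n" for j
  proof -
    have "w j \<le> bellman wmax j" if w: "w \<in> subsolutions" for w
      using w j bellman_mono[OF j le_wmax[OF w]] unfolding subsolutions_def by force
    thus ?thesis unfolding wmax_def using j shifted_fixpoint_subsolution by (auto intro!: cSup_least)
  qed
  thus ?thesis unfolding subsolutions_def
    using wmax_nonpos le_wmax[OF shifted_fixpoint_subsolution] by auto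
qed

lemma wmax_le_action: "j < n \<Longrightarrow> (c,h) \<in> Act j \<Longrightarrow> wmax j \<le> c + mat_vec n P wmax h"
  using wmax_subsolution bellman_le[of j c h wmax] unfolding subsolutions_def by fastforce

definition zero_set :: "nat set" where
  "zero_set = {j. j < n \<and> wmax j = 0}"

lemma zero_set_nonempty: "zero_set \<noteq> {}"
proof -
  obtain j where j: "j < n" "v j = Max (v ` {..<n})" using Max_in[OF v_finite] by auto
  thus ?thesis
    using le_wmax[OF shifted_fixpoint_subsolution j(1)] wmax_nonpos[of j] unfolding zero_set_def by auto
qed

definition tight :: "nat \<Rightarrow> real \<Rightarrow> nat \<Rightarrow> bool" where
  "tight j c h \<longleftrightarrow> c + mat_vec n P wmax h = wmax j"

definition reaches :: "nat \<Rightarrow> nat set \<Rightarrow> bool" where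
  "reaches h S \<longleftrightarrow> (\<exists>l<n. l \<in> S \<and> P h l > 0)"

lemma raised_subsolution:
  assumes R: "R \<subseteq> {..<n}"
    and trapped: "\<And>j c h. j \<in> R \<Longrightarrow> (c,h) \<in> Act j \<Longrightarrow> tight j c h \<Longrightarrow> \<not> reaches h ({..<n} - R)"
    and \<epsilon>: "\<epsilon> > 0" "\<And>j. j \<in> R \<Longrightarrow> \<epsilon> \<le> - wmax j"
      "\<And>j c h. j \<in> R \<Longrightarrow> (c,h) \<in> Act j \<Longrightarrow> \<not> tight j c h \<Longrightarrow> \<epsilon> \<le> c + mat_vec n P wmax h - wmax j"
  shows "(\<lambda>l. if l \<in> R then wmax l + \<epsilon> else wmax l) \<in> subsolutions"
proof -
  define w where "w l = (if l \<in> R then wmax l + \<epsilon> else wmax l)" for l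
  have w_ge: "wmax l \<le> w l" for l unfolding w_def using \<epsilon> by auto
  have mat_vec_w: "mat_vec n P w h = mat_vec n P wmax h + \<epsilon> * (\<Sum>l<n. if l \<in> R then P h l else 0)" for h
    unfolding mat_vec_def w_def sum_distrib_left sum.distrib[symmetric]
    by (intro sum.cong) (auto simp: algebra_simps)
  have "w j \<le> bellman w j" if j: "j < n" for j
  proof (cases "j \<in> R")
    case False
    hence "w j \<le> bellman wmax j" using wmax_subsolution j unfolding w_def subsolutions_def by auto
    also have "\<dots> \<le> bellman w j" using bellman_mono[OF j w_ge] .
    finally show ?thesis .
  next
    case True
    show ?thesis
    proof (rule bellman_greatest[OF j])
      fix c h assume a: "(c,h) \<in> Act j"
      have hq: "h < q" using Act_row[OF j a] .
      show "w j \<le> c + mat_vec n P w h"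
      proof (cases "tight j c h")
        case tight: True
        hence "(\<Sum>l<n. if l \<in> R then P h l else 0) = (\<Sum>l<n. P h l)"
          using trapped[OF True a] P_nonneg[OF hq] unfolding reaches_def by (intro sum.cong) force+
        thus ?thesis using tight True P_stoch[OF hq] unfolding mat_vec_w tight_def w_def by simp
      next
        case False
        have "\<epsilon> * (\<Sum>l<n. if l \<in> R then P h l else 0) \<ge> 0"
          using P_nonneg[OF hq] \<epsilon>(1) by (intro mult_nonneg_nonneg sum_nonneg) auto
        thus ?thesis using \<epsilon>(3)[OF True a False] True unfolding mat_vec_w w_def by simp
      qed
    qed
  qed
  moreover have "w j \<le> 0" if "j < n" for j using wmax_nonpos[of j] \<epsilon>(2)[of j] unfolding w_def by auto
  moreover have "v j - Max (v ` {..<n}) \<le> w j" if "j < n" for j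
    using le_wmax[OF shifted_fixpoint_subsolution that] w_ge[of j] by simp
  ultimately show ?thesis unfolding subsolutions_def w_def by auto
qed

text \<open>Otherwise, raising \<open>wmax\<close> on \<open>R\<close> by the smallest slack would contradict its maximality.\<close>

lemma tight_escape:
  assumes R: "R \<subseteq> {..<n}" "R \<noteq> {}" "R \<inter> zero_set = {}"
  shows "\<exists>j\<in>R. \<exists>c h. (c,h) \<in> Act j \<and> tight j c h \<and> reaches h ({..<n} - R)"
proof (rule ccontr)
  assume no_escape: "\<not> ?thesis"
  have finR: "finite R" using R finite_subset by blast
  have neg: "wmax j < 0" if "j \<in> R" for j
    using wmax_nonpos[of j] that R unfolding zero_set_def by force
  define slacks where "slacks = (\<Union>j\<in>R. (\<lambda>(c,h). c + mat_vec n P wmax h - wmax j)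
      ` {a \<in> Act j. \<not> tight j (fst a) (snd a)})"
  let ?E = "(\<lambda>j. - wmax j) ` R \<union> slacks"
  have "finite ?E" "?E \<noteq> {}" unfolding slacks_def using finR R Act_finite by auto
  moreover have "s > 0" if "s \<in> ?E" for s
    using that neg wmax_le_action R unfolding slacks_def tight_def by (force simp: less_le)
  ultimately have pos: "Min ?E > 0" and le: "\<And>s. s \<in> ?E \<Longrightarrow> Min ?E \<le> s" by auto
  have "Min ?E \<le> c + mat_vec n P wmax h - wmax j"
    if "j \<in> R" "(c,h) \<in> Act j" "\<not> tight j c h" for j c h
    using that by (intro le) (force simp: slacks_def)
  moreover have "\<not> reaches h ({..<n} - R)" if "j \<in> R" "(c,h) \<in> Act j" "tight j c h" for j c h
    using no_escape that by blast
  ultimately have "(\<lambda>l. if l \<in> R then wmax l + Min ?E else wmax l) \<in> subsolutions"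
    using pos le by (intro raised_subsolution[OF R(1)]) auto
  moreover obtain j where "j \<in> R" using R by auto
  ultimately show False using le_wmax[of _ j] R pos by fastforce
qed

definition grow :: "nat set \<Rightarrow> nat set" where
  "grow S = S \<union> {j. j < n \<and> (\<exists>c h. (c,h) \<in> Act j \<and> tight j c h \<and> reaches h S)}"

definition layer :: "nat \<Rightarrow> nat set" where
  "layer t = (grow ^^ t) zero_set"

lemma layer_0 [simp]: "layer 0 = zero_set"
  and layer_Suc [simp]: "layer (Suc t) = grow (layer t)"
  unfolding layer_def by simp_all

lemma layer_subset: "layer t \<subseteq> {..<n}"
  by (induction t) (auto simp: zero_set_def grow_def)

lemma layer_mono: "t \<le> s \<Longrightarrow> layer t \<subseteq> layer s"
  by (rule lift_Suc_mono_le[of layer]) (auto simp: grow_def)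

lemma card_layer: "min n (Suc t) \<le> card (layer t)"
proof (induction t)
  case 0
  have "finite zero_set" unfolding zero_set_def by simp
  hence "card zero_set \<ge> 1" using zero_set_nonempty by (simp add: Suc_leI card_gt_0_iff)
  thus ?case by simp
next
  case (Suc t)
  show ?case
  proof (cases "layer t = {..<n}")
    case True
    hence "layer (Suc t) = {..<n}" using layer_mono[of t "Suc t"] layer_subset[of "Suc t"] by auto
    thus ?thesis by simp
  next
    case False
    define R where "R = {..<n} - layer t"
    have R: "R \<subseteq> {..<n}" "R \<noteq> {}" "R \<inter> zero_set = {}"
      unfolding R_def using False layer_subset[of t] layer_mono[of 0 t] by auto
    obtain j c h where j: "j \<in> R" "(c,h) \<in> Act j" "tight j c h" "reaches h ({..<n} - R)"
      using tight_escape[OF R] by blast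
    have "{..<n} - R = layer t" unfolding R_def using layer_subset[of t] by auto
    hence "j \<in> layer (Suc t) - layer t" using j R unfolding R_def by (auto simp: grow_def)
    hence "layer t \<subset> layer (Suc t)" using layer_mono[of t "Suc t"] by auto
    hence "card (layer t) < card (layer (Suc t))"
      using finite_subset[OF layer_subset[of "Suc t"]] by (intro psubset_card_mono) auto
    thus ?thesis using Suc.IH by simp
  qed
qed

lemma layer_full: "layer (n - 1) = {..<n}"
proof -
  have "n \<le> card (layer (n - 1))" using card_layer[of "n - 1"] n_pos by simp
  thus ?thesis using layer_subset[of "n - 1"] by (metis card_lessThan card_seteq finite_lessThan)
qed

definition entry :: "nat \<Rightarrow> nat set" where
  "entry t = {h. h < q \<and> reaches h (layer t) \<and> (\<forall>s<t. \<not> reaches h (layer s))}"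

definition nondet_entries :: "nat \<Rightarrow> nat set" where
  "nondet_entries t = {s. s < t \<and> (\<exists>h\<in>entry s. nondet n P h)}"

text \<open>Distinct steps are first entered by distinct rows.\<close>

lemma card_nondet_entries: "card (nondet_entries t) \<le> min (card nondet_rows) t"
proof -
  have "card (nondet_entries t) \<le> card {..<t}"
    by (intro card_mono) (auto simp: nondet_entries_def)
  moreover have "card (nondet_entries t) \<le> card nondet_rows"
  proof -
    define pick where "pick s = (SOME h. h \<in> entry s \<and> nondet n P h)" for s
    have pick: "pick s \<in> entry s \<and> nondet n P (pick s)" if s: "s \<in> nondet_entries t" for s
    proof -
      obtain h where "h \<in> entry s \<and> nondet n P h" using s unfolding nondet_entries_def by blast
      thus ?thesis unfolding pick_def by (rule someI)
    qed
    have "inj_on pick (nondet_entries t)"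
    proof (rule inj_onI)
      fix s s' assume ss: "s \<in> nondet_entries t" "s' \<in> nondet_entries t" "pick s = pick s'"
      hence "pick s \<in> entry s" "pick s \<in> entry s'" using pick by metis+
      thus "s = s'" unfolding entry_def using linorder_neqE_nat by blast
    qed
    moreover have "pick ` nondet_entries t \<subseteq> nondet_rows"
      using pick unfolding entry_def by auto
    ultimately show ?thesis by (intro card_inj_on_le) auto
  qed
  ultimately show ?thesis by simp
qed

lemma card_nondet_entries_mono: "card (nondet_entries t) \<le> card (nondet_entries (Suc t))"
  by (rule card_mono) (auto simp: nondet_entries_def)

definition depth :: real where
  "depth = - Min (wmax ` {..<n})"

lemma wmax_ge_depth: "j < n \<Longrightarrow> - depth \<le> wmax j"
  unfolding depth_def minus_minus by (intro Min_le) auto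

lemma depth_nonneg: "depth \<ge> 0"
  using wmax_ge_depth[of 0] wmax_nonpos[of 0] n_pos by simp

lemma depth_div_antimono: "e \<le> e' \<Longrightarrow> depth / M ^ e' \<le> depth / M ^ e"
  using depth_nonneg M_ge_1
  by (intro divide_left_mono power_increasing mult_pos_pos) (auto intro: zero_less_power)

lemma wmax_plus_depth_nonneg: "j < n \<Longrightarrow> 0 \<le> wmax j + depth"
  using wmax_ge_depth[of j] by simp

lemma tight_step_depth:
  assumes j: "j < n" "(c,h) \<in> Act j" "tight j c h" and l: "l < n"
  shows "- \<beta> + P h l * (wmax l + depth) \<le> wmax j + depth"
proof -
  have hq: "h < q" using Act_row[OF j(1,2)] .
  have "mat_vec n P (\<lambda>l. wmax l + depth) h \<ge> P h l * (wmax l + depth)"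
    using wmax_plus_depth_nonneg by (intro mat_vec_ge_entry[OF hq l])
  moreover have "wmax j = c + mat_vec n P wmax h" using j(3) unfolding tight_def by simp
  moreover have "c \<ge> - \<beta>" using Act_cost[OF j(1,2)] by simp
  ultimately show ?thesis using mat_vec_add_const[OF hq] by simp
qed

lemma entry_of_new_layer:
  assumes "j \<notin> layer t" "j < n" "(c,h) \<in> Act j" "tight j c h" "reaches h (layer t)"
  shows "h \<in> entry t"
proof -
  have "\<not> reaches h (layer s)" if "s < t" for s
  proof
    assume "reaches h (layer s)"
    hence "j \<in> layer (Suc s)" using assms unfolding layer_Suc grow_def by auto
    thus False using layer_mono[of "Suc s" t] that assms(1) by auto
  qed
  thus ?thesis unfolding entry_def using Act_row assms by auto
qed

lemma layer_depth:
  "j \<in> layer t \<Longrightarrow> depth / M ^ card (nondet_entries t) - real t * \<beta> \<le> wmax j + depth"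
proof (induction t arbitrary: j)
  case 0
  thus ?case by (simp add: zero_set_def nondet_entries_def)
next
  case (Suc t)
  have step: "depth / M ^ card (nondet_entries (Suc t)) \<le> depth / M ^ card (nondet_entries t)"
    by (intro depth_div_antimono card_nondet_entries_mono)
  show ?case
  proof (cases "j \<in> layer t")
    case True
    thus ?thesis using Suc.IH[OF True] step beta_nonneg by (simp add: algebra_simps)
  next
    case False
    then obtain c h where a: "j < n" "(c,h) \<in> Act j" "tight j c h" "reaches h (layer t)"
      using Suc.prems unfolding layer_Suc grow_def by auto
    have hq: "h < q" using Act_row[OF a(1,2)] .
    obtain l where l: "l < n" "l \<in> layer t" "P h l > 0" using a(4) unfolding reaches_def by auto
    note IH = Suc.IH[OF l(2)] and wj = tight_step_depth[OF a(1-3) l(1)]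
    show ?thesis
    proof (cases "nondet n P h")
      case True
      with entry_of_new_layer[OF False a] have "nondet_entries (Suc t) = insert t (nondet_entries t)"
        unfolding nondet_entries_def by auto
      have shrink: "depth / M ^ card (nondet_entries (Suc t)) = depth / M ^ card (nondet_entries t) / M"
        using \<open>nondet_entries (Suc t) = insert t (nondet_entries t)\<close> by (simp add: nondet_entries_def)
      show ?thesis unfolding shrink
        using damped_step[OF P_min[OF hq l(1,3)] P_le_1[OF hq l(1)] _ _ beta_nonneg _ IH wj] M_ge_1 depth_nonneg
        by (simp add: algebra_simps)
    next
      case False
      hence "P h l = 1" using deterministic_row[OF hq _ l(1,3)] by simp
      thus ?thesis using wj IH step by (simp add: algebra_simps)
    qed
  qed
qed

text \<open>Every state lies in layer \<open>n - 1\<close>, in particular one where \<open>wmax = - depth\<close>.\<close>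

lemma depth_le: "depth \<le> real (n - 1) * \<beta> * M ^ min (card nondet_rows) (n - 1)"
proof -
  have "- depth \<in> wmax ` {..<n}"
    unfolding depth_def minus_minus using n_pos by (intro Min_in) (auto simp: lessThan_empty_iff)
  then obtain j where j: "j < n" "wmax j = - depth" by auto
  let ?e = "card (nondet_entries (n - 1))"
  have "depth / M ^ ?e \<le> real (n - 1) * \<beta>"
    using layer_depth[of j "n - 1"] j layer_full by simp
  hence "depth \<le> real (n - 1) * \<beta> * M ^ ?e" using M_ge_1 by (simp add: field_simps)
  also have "\<dots> \<le> real (n - 1) * \<beta> * M ^ min (card nondet_rows) (n - 1)"
    using M_ge_1 beta_nonneg card_nondet_entries[of "n - 1"]
    by (intro mult_left_mono power_increasing) auto
  finally show ?thesis .
qed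

end

context min_game
begin

theorem bounded_subsolution_exists:
  assumes "\<And>j. j < n \<Longrightarrow> bellman v j = v j"
  obtains w where "\<And>j. j < n \<Longrightarrow> w j \<le> bellman w j" "\<And>j. j < n \<Longrightarrow> w j \<le> 0"
    "\<And>j. j < n \<Longrightarrow> - (real (n - 1) * \<beta> * M ^ min (card nondet_rows) (n - 1)) \<le> w j"
proof -
  interpret min_game_fixpoint n q P Act M \<beta> v
    by unfold_locales (fact assms)
  show thesis
    using that[of wmax] wmax_subsolution wmax_ge_depth depth_le
    unfolding subsolutions_def by force
qed

end

section \<open>The Shapley operator and value iteration\<close>

lemma Max_image_mono:
  fixes f g :: "'a \<Rightarrow> 'b::linorder"
  shows "finite S \<Longrightarrow> S \<noteq> {} \<Longrightarrow> (\<And>s. s \<in> S \<Longrightarrow> f s \<le> g s) \<Longrightarrow> Max (f ` S) \<le> Max (g ` S)"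
  by (rule Max.boundedI) (auto intro: order_trans[OF _ Max_ge])

lemma Min_image_mono:
  fixes f g :: "'a \<Rightarrow> 'b::linorder"
  shows "finite S \<Longrightarrow> S \<noteq> {} \<Longrightarrow> (\<And>s. s \<in> S \<Longrightarrow> f s \<le> g s) \<Longrightarrow> Min (f ` S) \<le> Min (g ` S)"
  by (rule Min.boundedI) (auto intro: order_trans[OF Min_le])

lemma Max_ereal_image:
  assumes S: "finite S" "S' \<subseteq> S" "S' \<noteq> {}"
    and fin: "\<And>s. s \<in> S' \<Longrightarrow> f s = ereal (g s)" and inf: "\<And>s. s \<in> S - S' \<Longrightarrow> f s = -\<infinity>"
  shows "Max (f ` S) = ereal (Max (g ` S'))"
proof (rule Max_eqI)
  have "Max (g ` S') \<in> g ` S'" using S finite_subset by (intro Max_in) auto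
  thus "ereal (Max (g ` S')) \<in> f ` S" using fin S(2) by force
  show "y \<le> ereal (Max (g ` S'))" if "y \<in> f ` S" for y
  proof -
    obtain s where s: "s \<in> S" "y = f s" using \<open>y \<in> f ` S\<close> by blast
    show ?thesis
    proof (cases "s \<in> S'")
      case True
      hence "g s \<le> Max (g ` S')" using S finite_subset by (intro Max_ge) auto
      thus ?thesis using s fin[OF True] by simp
    qed (use s inf in simp)
  qed
qed (use S in simp)

lemma Min_ereal_image:
  assumes S: "finite S" "S' \<subseteq> S" "S' \<noteq> {}"
    and fin: "\<And>s. s \<in> S' \<Longrightarrow> f s = ereal (g s)" and inf: "\<And>s. s \<in> S - S' \<Longrightarrow> f s = \<infinity>"
  shows "Min (f ` S) = ereal (Min (g ` S'))"
proof (rule Min_eqI)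
  have "Min (g ` S') \<in> g ` S'" using S finite_subset by (intro Min_in) auto
  thus "ereal (Min (g ` S')) \<in> f ` S" using fin S(2) by force
  show "ereal (Min (g ` S')) \<le> y" if "y \<in> f ` S" for y
  proof -
    obtain s where s: "s \<in> S" "y = f s" using \<open>y \<in> f ` S\<close> by blast
    show ?thesis
    proof (cases "s \<in> S'")
      case True
      hence "Min (g ` S') \<le> g s" using S finite_subset by (intro Min_le) auto
      thus ?thesis using s fin[OF True] by simp
    qed (use s inf in simp)
  qed
qed (use S in simp)

context stochastic_matrix
begin

definition policy_chain :: "(nat \<Rightarrow> nat) \<Rightarrow> nat \<Rightarrow> nat \<Rightarrow> real" where
  "policy_chain \<rho> h h' = (\<Sum>l<n. if \<rho> l = h' then P h l else 0)"

lemma sum_policy_chain: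
  assumes "\<And>l. l < n \<Longrightarrow> \<rho> l < q"
  shows "(\<Sum>h'<q. policy_chain \<rho> h h' * Y h') = (\<Sum>l<n. P h l * Y (\<rho> l))"
proof -
  have "(\<Sum>h'<q. policy_chain \<rho> h h' * Y h') = (\<Sum>l<n. \<Sum>h'<q. if \<rho> l = h' then P h l * Y h' else 0)"
    unfolding policy_chain_def sum_distrib_right by (subst sum.swap) (auto intro!: sum.cong)
  also have "\<dots> = (\<Sum>l<n. P h l * Y (\<rho> l))" using assms by (intro sum.cong refl) (simp add: sum.delta)
  finally show ?thesis .
qed

lemma policy_chain_nonneg: "x < q \<Longrightarrow> policy_chain \<rho> x z \<ge> 0"
  unfolding policy_chain_def using P_nonneg by (intro sum_nonneg) auto

lemma policy_chain_stochastic: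
  "(\<And>l. l < n \<Longrightarrow> \<rho> l < q) \<Longrightarrow> x < q \<Longrightarrow> (\<Sum>z<q. policy_chain \<rho> x z) = 1"
  using sum_policy_chain[where h = x and Y = "\<lambda>_. 1"] P_stoch by simp

lemma policy_chain_pos_in_range:
  assumes "policy_chain \<rho> x z > 0"
  shows "z \<in> \<rho> ` {..<n}"
proof (rule ccontr)
  assume "z \<notin> \<rho> ` {..<n}"
  hence "policy_chain \<rho> x z = 0" unfolding policy_chain_def by (intro sum.neutral) auto
  thus False using assms by simp
qed

lemma policy_chain_inj: "inj_on \<rho> {..<n} \<Longrightarrow> l < n \<Longrightarrow> policy_chain \<rho> x (\<rho> l) = P x l"
  unfolding policy_chain_def
  by (subst sum.cong[OF refl, of _ _ "\<lambda>l'. if l' = l then P x l' else 0"]) (auto dest: inj_onD)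

text \<open>Averaging the policy equations against a stationary vector \<open>\<psi>\<close> of the chain on rows
  cancels the bias: \<open>\<pi> = \<psi> P\<close> is stationary for the chain on states.\<close>

lemma stationary_gain_identity:
  assumes \<rho>: "\<And>l. l < n \<Longrightarrow> \<rho> l < q"
    and policy: "\<And>l. l < n \<Longrightarrow> lam + v l = c l + mat_vec n P v (\<rho> l)"
    and stationary: "\<And>z. z < q \<Longrightarrow> (\<Sum>x<q. \<psi> x * policy_chain \<rho> x z) = \<psi> z"
  shows "lam * (\<Sum>h<q. \<psi> h) = (\<Sum>l<n. c l * (\<Sum>h<q. \<psi> h * P h l))"
proof -
  define \<pi> where "\<pi> l = (\<Sum>h<q. \<psi> h * P h l)" for l
  have mass: "(\<Sum>l<n. \<pi> l) = (\<Sum>h<q. \<psi> h)"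
    unfolding \<pi>_def using P_stoch by (subst sum.swap) (simp add: sum_distrib_left[symmetric])
  have "(\<Sum>l<n. \<pi> l * mat_vec n P v (\<rho> l)) = (\<Sum>h<q. \<psi> h * (\<Sum>l<n. P h l * mat_vec n P v (\<rho> l)))"
    unfolding \<pi>_def sum_distrib_right sum_distrib_left by (subst sum.swap) (simp add: ac_simps)
  also have "\<dots> = (\<Sum>h<q. \<psi> h * (\<Sum>h'<q. policy_chain \<rho> h h' * mat_vec n P v h'))"
    using sum_policy_chain[OF \<rho>, where Y = "mat_vec n P v"] by simp
  also have "\<dots> = (\<Sum>h'<q. (\<Sum>h<q. \<psi> h * policy_chain \<rho> h h') * mat_vec n P v h')"
    unfolding sum_distrib_left sum_distrib_right by (subst sum.swap) (simp add: ac_simps)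
  also have "\<dots> = (\<Sum>h<q. \<psi> h * mat_vec n P v h)" using stationary by simp
  also have "\<dots> = (\<Sum>l<n. \<pi> l * v l)"
    unfolding mat_vec_def \<pi>_def sum_distrib_left sum_distrib_right by (subst sum.swap) (simp add: ac_simps)
  also have "\<dots> = (\<Sum>l<n. \<pi> l * (c l - lam + mat_vec n P v (\<rho> l)))"
  proof (intro sum.cong refl)
    fix l assume "l \<in> {..<n}"
    hence "v l = c l - lam + mat_vec n P v (\<rho> l)" using policy[of l] by simp
    thus "\<pi> l * v l = \<pi> l * (c l - lam + mat_vec n P v (\<rho> l))" by simp
  qed
  finally have "(\<Sum>l<n. c l * \<pi> l) = lam * (\<Sum>l<n. \<pi> l)"
    by (simp add: algebra_simps sum.distrib sum_subtractf sum_distrib_left)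
  thus ?thesis using mass by (simp add: \<pi>_def)
qed

lemma power_mult_Ints_mono:
  fixes M :: int
  assumes "real_of_int M ^ a * x \<in> \<int>" "a \<le> e"
  shows "real_of_int M ^ e * x \<in> \<int>"
proof -
  obtain k where "e = a + k" using le_Suc_ex[OF assms(2)] ..
  hence "real_of_int M ^ e * x = real_of_int M ^ k * (real_of_int M ^ a * x)" by (simp add: power_add)
  also have "\<dots> \<in> \<int>" using Ints_mult[OF Ints_power[OF Ints_of_int] assms(1)] .
  finally show ?thesis .
qed

text \<open>Rows in \<open>C \<inter> nondet_rows\<close> scale \<open>\<psi>\<close> by one factor \<open>M\<close> less than needed but are
  themselves scaled by \<open>M\<close>; deterministic rows of \<open>P\<close> are integral.\<close>

lemma stationary_mix_scaled_Ints:
  fixes M :: int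
  assumes C: "finite C" and out: "\<And>h. h < q \<Longrightarrow> h \<notin> C \<Longrightarrow> \<psi> h = 0"
    and \<psi>_Ints: "\<And>h. h < q \<Longrightarrow> real_of_int M ^ card (C \<inter> nondet_rows - {h}) * \<psi> h \<in> \<int>"
    and MP_Ints: "\<And>h l. h < q \<Longrightarrow> l < n \<Longrightarrow> real_of_int M * P h l \<in> \<int>"
    and e: "card (C \<inter> nondet_rows) \<le> e" and l: "l < n"
  shows "real_of_int M ^ e * (\<Sum>h<q. \<psi> h * P h l) \<in> \<int>"
  unfolding sum_distrib_left
proof (rule Ints_sum)
  fix h assume h: "h \<in> {..<q}"
  show "real_of_int M ^ e * (\<psi> h * P h l) \<in> \<int>"
  proof (cases "h \<in> C \<inter> nondet_rows")
    case True
    hence "card (C \<inter> nondet_rows) = Suc (card (C \<inter> nondet_rows - {h}))"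
      using C by (intro card_Suc_Diff1[symmetric]) auto
    with e obtain e' where e': "e = Suc e'" "card (C \<inter> nondet_rows - {h}) \<le> e'"
      using Suc_le_D by fastforce
    have "real_of_int M ^ e * (\<psi> h * P h l) = (real_of_int M ^ e' * \<psi> h) * (real_of_int M * P h l)"
      unfolding e' by simp
    also have "\<dots> \<in> \<int>"
      using power_mult_Ints_mono[OF \<psi>_Ints e'(2)] MP_Ints[of h l] h l by (simp add: Ints_mult)
    finally show ?thesis .
  next
    case False
    have "card (C \<inter> nondet_rows - {h}) \<le> e" using e C by (meson Diff_subset card_mono finite_Int le_trans)
    hence "real_of_int M ^ e * \<psi> h \<in> \<int>" using power_mult_Ints_mono \<psi>_Ints h by blast
    moreover have "\<psi> h = 0 \<or> P h l \<in> \<int>" using False out h l deterministic_row_Ints by auto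
    ultimately show ?thesis by (metis Ints_0 Ints_mult mult.assoc mult_zero_left mult_zero_right)
  qed
qed

text \<open>The denominator exponent is at most \<open>n - 1\<close>: in the extreme case \<open>\<rho>\<close> is injective
  and \<open>\<psi> P\<close> is just \<open>\<psi>\<close> read along \<open>\<rho>\<close>.\<close>

lemma policy_stationary_vector:
  fixes M :: int
  assumes n_pos: "n \<ge> 1" and MP_Ints: "\<And>h l. h < q \<Longrightarrow> l < n \<Longrightarrow> real_of_int M * P h l \<in> \<int>"
    and \<rho>: "\<And>l. l < n \<Longrightarrow> \<rho> l < q"
  obtains \<psi> e where "(\<Sum>h<q. \<psi> h) > 0" "(\<Sum>h<q. \<psi> h) \<le> real n"
    "\<And>z. z < q \<Longrightarrow> (\<Sum>x<q. \<psi> x * policy_chain \<rho> x z) = \<psi> z"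
    "e \<le> min (card nondet_rows) (n - 1)"
    "\<And>l. l < n \<Longrightarrow> real_of_int M ^ e * (\<Sum>h<q. \<psi> h * P h l) \<in> \<int>"
proof -
  let ?X = "\<rho> ` {..<n}"
  have X: "?X \<subseteq> {..<q}" "?X \<noteq> {}" using \<rho> n_pos by (auto simp: lessThan_empty_iff)
  have scaled: "real_of_int M * policy_chain \<rho> x z \<in> \<int>" if "x \<in> nondet_rows" for x z
    unfolding policy_chain_def sum_distrib_left using MP_Ints that by (intro Ints_sum) auto
  have integral: "policy_chain \<rho> x z \<in> \<int>" if "x < q" "x \<notin> nondet_rows" for x z
    unfolding policy_chain_def using deterministic_row_Ints that by (intro Ints_sum) auto
  show thesis
  proof (rule stationary_vector_exists[of q "policy_chain \<rho>" ?X nondet_rows M])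
    fix C \<psi> c
    assume C: "C \<subseteq> ?X" "c \<in> C" "\<psi> c > 0"
      and \<psi>_bounds: "\<And>x. x < q \<Longrightarrow> 0 \<le> \<psi> x \<and> \<psi> x \<le> 1"
      and \<psi>_out: "\<And>x. x < q \<Longrightarrow> x \<notin> C \<Longrightarrow> \<psi> x = 0"
      and stationary: "\<And>z. z < q \<Longrightarrow> (\<Sum>x<q. \<psi> x * policy_chain \<rho> x z) = \<psi> z"
      and \<psi>_Ints: "\<And>x. x < q \<Longrightarrow> real_of_int M ^ card (C \<inter> nondet_rows - {x}) * \<psi> x \<in> \<int>"
    have Cq: "C \<subseteq> {..<q}" using C(1) X(1) by auto
    have finC: "finite C" using finite_subset[OF C(1)] by simp
    have cardC: "card C \<le> n" using card_mono[OF _ C(1)] card_image_le[of "{..<n}" \<rho>] by simp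
    have "\<psi> c \<le> (\<Sum>h\<in>C. \<psi> h)" "(\<Sum>h\<in>C. \<psi> h) \<le> card C"
      using C \<psi>_bounds Cq finC sum_mono[of C \<psi> "\<lambda>_. 1"] by (auto intro: member_le_sum)
    moreover have "(\<Sum>h<q. \<psi> h) = (\<Sum>h\<in>C. \<psi> h)" using Cq \<psi>_out by (intro sum.mono_neutral_right) auto
    ultimately have mass: "(\<Sum>h<q. \<psi> h) > 0" "(\<Sum>h<q. \<psi> h) \<le> real n" using C(3) cardC by auto
    note mix = stationary_mix_scaled_Ints[OF finC \<psi>_out \<psi>_Ints MP_Ints]
    show thesis
    proof (cases "card (C \<inter> nondet_rows) \<le> n - 1")
      case True
      moreover have "card (C \<inter> nondet_rows) \<le> card nondet_rows" by (intro card_mono) auto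
      ultimately show thesis using that[OF mass stationary _ mix] by simp
    next
      case False
      hence full: "card (C \<inter> nondet_rows) = n" "card C = n"
        using card_mono[OF finC, of "C \<inter> nondet_rows"] cardC by auto
      hence "C \<inter> nondet_rows = C" using card_subset_eq[OF finC, of "C \<inter> nondet_rows"] by auto
      have "C = ?X" using card_seteq[OF _ C(1)] full card_image_le[of "{..<n}" \<rho>] by auto
      hence "inj_on \<rho> {..<n}" using full by (simp add: eq_card_imp_inj_on)
      hence "(\<Sum>h<q. \<psi> h * P h l) = \<psi> (\<rho> l)" if "l < n" for l
        using stationary[OF \<rho>[OF that]] policy_chain_inj that by simp
      moreover have "real_of_int M ^ (n - 1) * \<psi> h \<in> \<int>" if h: "h < q" for h
      proof (cases "h \<in> C")
        case True
        hence "card (C \<inter> nondet_rows - {h}) = n - 1" using full \<open>C \<inter> nondet_rows = C\<close> finC by simp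
        thus ?thesis using \<psi>_Ints[OF h] by simp
      qed (use \<psi>_out h in simp)
      moreover have "n \<le> card nondet_rows" using full(1) card_mono[of nondet_rows "C \<inter> nondet_rows"] by auto
      ultimately show thesis using that[OF mass stationary, of "n - 1"] \<rho> by auto
    qed
  qed (use X scaled integral \<rho> policy_chain_nonneg policy_chain_stochastic policy_chain_pos_in_range
      in auto)
qed

end

locale game = stochastic_matrix n q P
  for n q :: nat and P :: "nat \<Rightarrow> nat \<Rightarrow> real" +
  fixes m :: nat and A B :: "nat \<Rightarrow> nat \<Rightarrow> ereal" and Q :: "nat \<Rightarrow> nat \<Rightarrow> int" and M :: int
  assumes n_pos: "n \<ge> 1"
    and A_int: "\<And>i j. i < m \<Longrightarrow> j < n \<Longrightarrow> A i j = -\<infinity> \<or> (\<exists>z::int. A i j = ereal (of_int z))"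
    and B_int: "\<And>i h. i < m \<Longrightarrow> h < q \<Longrightarrow> B i h = -\<infinity> \<or> (\<exists>z::int. B i h = ereal (of_int z))"
    and A_col: "\<And>j. j < n \<Longrightarrow> \<exists>i<m. A i j \<noteq> -\<infinity>"
    and B_row: "\<And>i. i < m \<Longrightarrow> \<exists>h<q. B i h \<noteq> -\<infinity>"
    and M_pos: "M > 0"
    and P_rat: "\<And>h l. h < q \<Longrightarrow> l < n \<Longrightarrow> P h l = real_of_int (Q h l) / real_of_int M"
begin

abbreviation F :: "(nat \<Rightarrow> real) \<Rightarrow> nat \<Rightarrow> real" where
  "F \<equiv> shapley m n q A B P"

abbreviation W :: real where
  "W \<equiv> weight_W m n q A B"

abbreviation rA :: "nat \<Rightarrow> nat \<Rightarrow> real" where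
  "rA i j \<equiv> real_of_ereal (A i j)"

abbreviation rB :: "nat \<Rightarrow> nat \<Rightarrow> real" where
  "rB i h \<equiv> real_of_ereal (B i h)"

definition A_supp :: "nat \<Rightarrow> nat set" where
  "A_supp j = {i. i < m \<and> A i j \<noteq> -\<infinity>}"

definition B_supp :: "nat \<Rightarrow> nat set" where
  "B_supp i = {h. h < q \<and> B i h \<noteq> -\<infinity>}"

definition max_stage :: "(nat \<Rightarrow> real) \<Rightarrow> nat \<Rightarrow> real" where
  "max_stage x i = Max ((\<lambda>h. rB i h + mat_vec n P x h) ` B_supp i)"

lemma A_supp_finite: "finite (A_supp j)" and A_supp_nonempty: "j < n \<Longrightarrow> A_supp j \<noteq> {}"
  and A_supp_lt: "i \<in> A_supp j \<Longrightarrow> i < m"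
  unfolding A_supp_def using A_col by auto

lemma B_supp_finite: "finite (B_supp i)" and B_supp_nonempty: "i < m \<Longrightarrow> B_supp i \<noteq> {}"
  and B_supp_lt: "h \<in> B_supp i \<Longrightarrow> h < q"
  unfolding B_supp_def using B_row by auto

lemma A_finite: "i \<in> A_supp j \<Longrightarrow> j < n \<Longrightarrow> A i j = ereal (rA i j)"
  and A_Ints: "i \<in> A_supp j \<Longrightarrow> j < n \<Longrightarrow> rA i j \<in> \<int>"
  using A_int[of i j] unfolding A_supp_def by auto

lemma B_finite: "h \<in> B_supp i \<Longrightarrow> i < m \<Longrightarrow> B i h = ereal (rB i h)"
  and B_Ints: "h \<in> B_supp i \<Longrightarrow> i < m \<Longrightarrow> rB i h \<in> \<int>"
  using B_int[of i h] unfolding B_supp_def by auto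

lemma trop_mv_eq_max_stage:
  assumes i: "i < m"
  shows "trop_mv q B (\<lambda>h. ereal (mat_vec n P x h)) i = ereal (max_stage x i)"
  unfolding trop_mv_def max_stage_def
proof (rule Max_ereal_image)
  show "B i h + ereal (mat_vec n P x h) = ereal (rB i h + mat_vec n P x h)"
    if "h \<in> B_supp i" for h
    using B_finite[OF that i] by (metis plus_ereal.simps(1) real_of_ereal.simps(1))
qed (use i B_supp_nonempty in \<open>auto simp: B_supp_def\<close>)

lemma shapley_eq:
  assumes j: "j < n"
  shows "F x j = Min ((\<lambda>i. max_stage x i - rA i j) ` A_supp j)"
proof -
  have "trop_sharp m A (trop_mv q B (\<lambda>h. ereal (mat_vec n P x h))) j
      = ereal (Min ((\<lambda>i. max_stage x i - rA i j) ` A_supp j))"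
    unfolding trop_sharp_def
  proof (rule Min_ereal_image)
    show "(if A i j = -\<infinity> then \<infinity> else - A i j + trop_mv q B (\<lambda>h. ereal (mat_vec n P x h)) i)
        = ereal (max_stage x i - rA i j)" if i: "i \<in> A_supp j" for i
    proof -
      obtain a where "A i j = ereal a" using A_finite[OF i j] by blast
      thus ?thesis using trop_mv_eq_max_stage[OF A_supp_lt[OF i]] by simp
    qed
  qed (use j A_supp_nonempty in \<open>auto simp: A_supp_def\<close>)
  thus ?thesis unfolding shapley_def by simp
qed

lemma max_stage_ge: "h \<in> B_supp i \<Longrightarrow> rB i h + mat_vec n P x h \<le> max_stage x i"
  unfolding max_stage_def using B_supp_finite by (intro Max_ge) auto

lemma max_stage_attained: "i < m \<Longrightarrow> \<exists>h\<in>B_supp i. max_stage x i = rB i h + mat_vec n P x h"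
  using Max_in[of "(\<lambda>h. rB i h + mat_vec n P x h) ` B_supp i"] B_supp_finite B_supp_nonempty
  unfolding max_stage_def by fastforce

lemma shapley_le: "j < n \<Longrightarrow> i \<in> A_supp j \<Longrightarrow> F x j \<le> max_stage x i - rA i j"
  unfolding shapley_eq using A_supp_finite by (intro Min_le) auto

lemma shapley_attained: "j < n \<Longrightarrow> \<exists>i\<in>A_supp j. F x j = max_stage x i - rA i j"
  using Min_in[of "(\<lambda>i. max_stage x i - rA i j) ` A_supp j"] A_supp_finite A_supp_nonempty
  unfolding shapley_eq by fastforce

lemma max_stage_mono: "i < m \<Longrightarrow> (\<And>l. l < n \<Longrightarrow> x l \<le> y l) \<Longrightarrow> max_stage x i \<le> max_stage y i"
  unfolding max_stage_def using B_supp_finite B_supp_nonempty mat_vec_mono B_supp_lt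
  by (intro Max_image_mono) (auto intro: add_left_mono)

lemma max_stage_add_const: "i < m \<Longrightarrow> max_stage (\<lambda>l. x l + t) i = max_stage x i + t"
  unfolding max_stage_def using B_supp_finite B_supp_nonempty mat_vec_add_const B_supp_lt
  by (simp add: add.assoc Max_add_commute[symmetric] cong: image_cong)

lemma shapley_mono: "j < n \<Longrightarrow> (\<And>l. l < n \<Longrightarrow> x l \<le> y l) \<Longrightarrow> F x j \<le> F y j"
  unfolding shapley_eq using A_supp_finite A_supp_nonempty max_stage_mono A_supp_lt
  by (intro Min_image_mono) (auto intro: diff_right_mono)

lemma shapley_add_const:
  assumes j: "j < n"
  shows "F (\<lambda>l. x l + t) j = F x j + t"
proof -
  have "(\<lambda>i. max_stage (\<lambda>l. x l + t) i - rA i j) ` A_supp j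
      = (\<lambda>i. (max_stage x i - rA i j) + t) ` A_supp j"
    by (intro image_cong) (auto simp: max_stage_add_const A_supp_lt)
  thus ?thesis unfolding shapley_eq[OF j]
    using Min_add_commute[OF A_supp_finite A_supp_nonempty[OF j], of "\<lambda>i. max_stage x i - rA i j" t]
    by simp
qed

lemma shapley_le_add: "(\<And>l. l < n \<Longrightarrow> x l \<le> y l + c) \<Longrightarrow> j < n \<Longrightarrow> F x j \<le> F y j + c"
  using shapley_mono[of j x "\<lambda>l. y l + c"] shapley_add_const[of j y c] by simp

lemma funpow_shapley_le_add:
  "(\<And>l. l < n \<Longrightarrow> x l \<le> y l + c) \<Longrightarrow> j < n \<Longrightarrow> (F ^^ k) x j \<le> (F ^^ k) y j + c"
  by (induction k arbitrary: j) (auto intro: shapley_le_add)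

lemma funpow_shapley_bias:
  assumes "is_bias n F lam v" "j < n"
  shows "(F ^^ k) v j = real k * lam + v j"
  using assms(2)
proof (induction k arbitrary: j)
  case (Suc k)
  have "(F ^^ Suc k) v j \<le> F (\<lambda>l. v l + real k * lam) j" "F (\<lambda>l. v l + real k * lam) j \<le> (F ^^ Suc k) v j"
    using shapley_le_add[of _ _ 0 j] Suc by auto
  thus ?case using shapley_add_const[OF Suc.prems] assms(1) Suc.prems
    unfolding is_bias_def by (simp add: algebra_simps)
qed simp

definition spread :: "(nat \<Rightarrow> real) \<Rightarrow> real" where
  "spread v = Max (v ` {..<n}) - Min (v ` {..<n})"

lemma image_lessThan_finite: "finite (v ` {..<n})" "v ` {..<n} \<noteq> {}"
  using n_pos by (auto simp: lessThan_empty_iff)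

lemma value_iter_near_bias:
  assumes b: "is_bias n F lam v" and j: "j < n"
  shows "\<bar>value_iter F k j - real k * lam\<bar> \<le> spread v"
proof -
  let ?mx = "Max (v ` {..<n})" and ?mn = "Min (v ` {..<n})"
  have v: "?mn \<le> v l" "v l \<le> ?mx" if "l < n" for l using image_lessThan_finite that by auto
  have "(F ^^ k) (\<lambda>_. 0) j \<le> (F ^^ k) v j + (- ?mn)"
    using v by (intro funpow_shapley_le_add[OF _ j]) auto
  moreover have "(F ^^ k) v j \<le> (F ^^ k) (\<lambda>_. 0) j + ?mx"
    using v by (intro funpow_shapley_le_add[OF _ j]) auto
  ultimately show ?thesis using v[OF j] funpow_shapley_bias[OF b j, of k]
    unfolding value_iter_def spread_def by linarith
qed

lemma bias_eigenvalue_unique: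
  assumes b: "is_bias n F lam v" and b': "is_bias n F lam' v'"
  shows "lam = lam'"
proof (rule ccontr)
  assume "lam \<noteq> lam'"
  then obtain k where k: "spread v + spread v' < real k * \<bar>lam - lam'\<bar>"
    using ex_less_of_nat_mult[of "\<bar>lam - lam'\<bar>"] by auto
  have "\<bar>real k * lam - real k * lam'\<bar> \<le> spread v + spread v'"
    using value_iter_near_bias[OF b, of 0 k] value_iter_near_bias[OF b', of 0 k] n_pos by linarith
  thus False using k by (simp add: abs_mult right_diff_distrib[symmetric])
qed

lemma ergodic_const_eq: "is_bias n F lam v \<Longrightarrow> ergodic_const n F = lam"
  unfolding ergodic_const_def by (rule the_equality) (auto intro: bias_eigenvalue_unique)

text \<open>By monotonicity and homogeneity a strict sign of \<open>u\<^sup>N\<close> propagates to \<open>u\<^sup>t\<^sup>N\<close> with linear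
  growth, which the bias bound on \<open>u\<^sup>k - k lam\<close> only allows if \<open>lam\<close> has that sign.\<close>

lemma ergodic_neg_if_iterate_neg:
  assumes b: "is_bias n F lam v" and neg: "Max (value_iter F N ` {..<n}) < 0"
  shows "lam < 0"
proof (rule ccontr)
  assume "\<not> lam < 0"
  define a where "a = Max (value_iter F N ` {..<n})"
  have "value_iter F (t * N) j \<le> real t * a" if "j < n" for t j
    using that
  proof (induction t arbitrary: j)
    case (Suc t)
    have "value_iter F (Suc t * N) j = (F ^^ N) (value_iter F (t * N)) j"
      unfolding value_iter_def by (simp add: funpow_add)
    also have "\<dots> \<le> value_iter F N j + real t * a"
      using Suc unfolding value_iter_def by (intro funpow_shapley_le_add) auto
    also have "value_iter F N j \<le> a" unfolding a_def using Suc.prems by (intro Max_ge) auto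
    finally show ?case by (simp add: algebra_simps)
  qed (simp add: value_iter_def)
  note iter = this
  obtain t where t: "spread v < - (real t * a)"
    using ex_less_of_nat_mult[of "- a" "spread v"] neg unfolding a_def by auto
  have "real (t * N) * lam \<ge> 0" using \<open>\<not> lam < 0\<close> by simp
  moreover have "value_iter F (t * N) 0 \<le> real t * a" using iter n_pos by simp
  moreover have "\<bar>value_iter F (t * N) 0 - real (t * N) * lam\<bar> \<le> spread v"
    using value_iter_near_bias[OF b, of 0 "t * N"] n_pos by linarith
  ultimately show False using t by linarith
qed

lemma ergodic_pos_if_iterate_pos:
  assumes b: "is_bias n F lam v" and pos: "Min (value_iter F N ` {..<n}) > 0"
  shows "lam > 0"
proof (rule ccontr)
  assume "\<not> lam > 0"
  define a where "a = Min (value_iter F N ` {..<n})"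
  have "real t * a \<le> value_iter F (t * N) j" if "j < n" for t j
    using that
  proof (induction t arbitrary: j)
    case (Suc t)
    have "a \<le> value_iter F N j" unfolding a_def using Suc.prems by (intro Min_le) auto
    also have "\<dots> \<le> (F ^^ N) (value_iter F (t * N)) j + - (real t * a)"
      using Suc unfolding value_iter_def by (intro funpow_shapley_le_add) auto
    also have "(F ^^ N) (value_iter F (t * N)) j = value_iter F (Suc t * N) j"
      unfolding value_iter_def by (simp add: funpow_add)
    finally show ?case by (simp add: algebra_simps)
  qed (simp add: value_iter_def)
  note iter = this
  obtain t where t: "spread v < real t * a"
    using ex_less_of_nat_mult[of a "spread v"] pos unfolding a_def by auto
  have "real (t * N) * lam \<le> 0" using \<open>\<not> lam > 0\<close> by (simp add: mult_nonneg_nonpos)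
  moreover have "real t * a \<le> value_iter F (t * N) 0" using iter n_pos by simp
  moreover have "\<bar>value_iter F (t * N) 0 - real (t * N) * lam\<bar> \<le> spread v"
    using value_iter_near_bias[OF b, of 0 "t * N"] n_pos by linarith
  ultimately show False using t by linarith
qed

lemma weight_W_ge: "j < n \<Longrightarrow> i \<in> A_supp j \<Longrightarrow> h \<in> B_supp i \<Longrightarrow> \<bar>rB i h - rA i j\<bar> \<le> W"
proof -
  assume j: "j < n" and i: "i \<in> A_supp j" and h: "h \<in> B_supp i"
  let ?S = "{\<bar>rA i j - rB i h\<bar> | i j h. i < m \<and> j < n \<and> h < q \<and> A i j \<noteq> -\<infinity> \<and> B i h \<noteq> -\<infinity>}"
  have "?S \<subseteq> (\<lambda>(i,j,h). \<bar>rA i j - rB i h\<bar>) ` ({..<m} \<times> {..<n} \<times> {..<q})" by force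
  hence "finite ?S" by (rule finite_subset) auto
  moreover have "\<bar>rA i j - rB i h\<bar> \<in> ?S" using i h j unfolding A_supp_def B_supp_def by blast
  ultimately show ?thesis unfolding weight_W_def by (simp add: abs_minus_commute)
qed

lemma abs_bias_eigenvalue_le_W:
  assumes b: "is_bias n F lam v"
  shows "\<bar>lam\<bar> \<le> W"
proof -
  obtain j1 where j1: "j1 < n" "v j1 = Max (v ` {..<n})" using Max_in[OF image_lessThan_finite, of v] by auto
  obtain i1 where i1: "i1 \<in> A_supp j1" using A_supp_nonempty[OF j1(1)] by auto
  obtain h1 where h1: "h1 \<in> B_supp i1" "max_stage v i1 = rB i1 h1 + mat_vec n P v h1"
    using max_stage_attained A_supp_lt[OF i1] by blast
  have "lam + v j1 \<le> max_stage v i1 - rA i1 j1"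
    using b j1 shapley_le[OF j1(1) i1] unfolding is_bias_def by metis
  also have "\<dots> \<le> (rB i1 h1 - rA i1 j1) + v j1"
    using h1 mat_vec_le_Max[OF B_supp_lt[OF h1(1)], of v] n_pos j1(2) by simp
  finally have upper: "lam \<le> W" using weight_W_ge[OF j1(1) i1 h1(1)] by simp
  obtain j2 where j2: "j2 < n" "v j2 = Min (v ` {..<n})"
    using Min_in[OF image_lessThan_finite, of v] by auto
  obtain i2 where i2: "i2 \<in> A_supp j2" "F v j2 = max_stage v i2 - rA i2 j2"
    using shapley_attained[OF j2(1)] by blast
  obtain h2 where h2: "h2 \<in> B_supp i2" using B_supp_nonempty[OF A_supp_lt[OF i2(1)]] by auto
  have "(rB i2 h2 - rA i2 j2) + v j2 \<le> max_stage v i2 - rA i2 j2"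
    using max_stage_ge[OF h2, of v] Min_le_mat_vec[OF B_supp_lt[OF h2], of v] n_pos j2(2) by simp
  also have "\<dots> = lam + v j2" using b j2 i2 unfolding is_bias_def by simp
  finally have "- W \<le> lam" using weight_W_ge[OF j2(1) i2(1) h2] by simp
  thus ?thesis using upper by simp
qed

lemma P_ge_inverse_M: "h < q \<Longrightarrow> l < n \<Longrightarrow> P h l > 0 \<Longrightarrow> P h l \<ge> 1 / real_of_int M"
  using P_rat[of h l] M_pos by (simp add: zero_less_divide_iff divide_right_mono)

lemma M_times_P_Ints: "h < q \<Longrightarrow> l < n \<Longrightarrow> real_of_int M * P h l \<in> \<int>"
  using P_rat M_pos by simp

abbreviation kappa :: nat where
  "kappa \<equiv> min (num_nondet q n P) (n - 1)"

definition eigen_span_bound :: "real \<Rightarrow> real" where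
  "eigen_span_bound lam = real (n - 1) * (W + \<bar>lam\<bar>) * real_of_int M ^ kappa"

text \<open>Fixing a Max strategy \<open>\<tau>\<close> optimal at the bias vector \<open>v\<close> leaves a one-player game for
  Min whose Bellman operator is \<open>F - lam\<close> restricted to \<open>\<tau>\<close> and fixes \<open>v\<close>.\<close>

lemma bias_subeigenvector:
  assumes b: "is_bias n F lam v"
  obtains w where "\<And>j. j < n \<Longrightarrow> lam + w j \<le> F w j" "\<And>j. j < n \<Longrightarrow> w j \<le> 0"
    "\<And>j. j < n \<Longrightarrow> - eigen_span_bound lam \<le> w j"
proof -
  have "\<forall>i. \<exists>h. i < m \<longrightarrow> h \<in> B_supp i \<and> max_stage v i = rB i h + mat_vec n P v h"
    using max_stage_attained by metis
  then obtain \<tau> where \<tau>: "\<And>i. i < m \<Longrightarrow> \<tau> i \<in> B_supp i \<and> max_stage v i = rB i (\<tau> i) + mat_vec n P v (\<tau> i)"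
    by metis
  define Act where "Act j = (\<lambda>i. (rB i (\<tau> i) - rA i j - lam, \<tau> i)) ` A_supp j" for j
  interpret min_game n q P Act "real_of_int M" "W + \<bar>lam\<bar>"
  proof
    show "\<bar>c\<bar> \<le> W + \<bar>lam\<bar>" if j: "j < n" and a: "(c, h) \<in> Act j" for j c h
    proof -
      obtain i where i: "i \<in> A_supp j" "c = rB i (\<tau> i) - rA i j - lam" using a unfolding Act_def by auto
      thus ?thesis using weight_W_ge[OF j i(1)] \<tau>[OF A_supp_lt[OF i(1)]] by fastforce
    qed
    show "h < q" if "j < n" "(c, h) \<in> Act j" for j c h
      using that \<tau> A_supp_lt B_supp_lt unfolding Act_def by blast
  qed (use n_pos A_supp_finite A_supp_nonempty P_ge_inverse_M M_pos \<tau> A_supp_lt B_supp_lt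
      in \<open>auto simp: Act_def\<close>)
  have bellman_eq: "bellman x j = Min ((\<lambda>i. (rB i (\<tau> i) + mat_vec n P x (\<tau> i) - rA i j) + - lam) ` A_supp j)"
    for x j unfolding bellman_def Act_def image_image by (simp add: algebra_simps)
  have fixpoint: "bellman v j = v j" if j: "j < n" for j
  proof -
    have "bellman v j = Min ((\<lambda>i. (max_stage v i - rA i j) + - lam) ` A_supp j)"
      unfolding bellman_eq using \<tau> A_supp_lt by (intro arg_cong[where f = Min] image_cong) auto
    also have "\<dots> = F v j - lam"
      unfolding shapley_eq[OF j]
      using Min_add_commute[OF A_supp_finite A_supp_nonempty[OF j], of "\<lambda>i. max_stage v i - rA i j" "- lam"]
      by simp
    finally show ?thesis using b j unfolding is_bias_def by simp
  qed
  obtain w where w: "\<And>j. j < n \<Longrightarrow> w j \<le> bellman w j" "\<And>j. j < n \<Longrightarrow> w j \<le> 0"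
    "\<And>j. j < n \<Longrightarrow> - (real (n - 1) * (W + \<bar>lam\<bar>) * real_of_int M
      ^ min (card nondet_rows) (n - 1)) \<le> w j"
    using bounded_subsolution_exists[OF fixpoint] by blast
  have "lam + w j \<le> F w j" if j: "j < n" for j
  proof -
    have "bellman w j + lam = Min ((\<lambda>i. rB i (\<tau> i) + mat_vec n P w (\<tau> i) - rA i j) ` A_supp j)"
      unfolding bellman_eq
      using Min_add_commute[OF A_supp_finite A_supp_nonempty[OF j],
          of "\<lambda>i. rB i (\<tau> i) + mat_vec n P w (\<tau> i) - rA i j" "- lam"]
      by simp
    also have "\<dots> \<le> F w j" unfolding shapley_eq[OF j]
      using max_stage_ge \<tau> A_supp_lt
      by (intro Min_image_mono[OF A_supp_finite A_supp_nonempty[OF j]]) (auto intro: diff_right_mono)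
    finally show ?thesis using w(1)[OF j] by linarith
  qed
  thus thesis using that w(2,3) unfolding eigen_span_bound_def num_nondet_eq_card by blast
qed

text \<open>Dually, fixing a Min strategy \<open>\<sigma>\<close> optimal at \<open>v\<close> leaves a one-player game for Max;
  negating turns it into a game for Min with fixed point \<open>- v\<close>.\<close>

lemma bias_supereigenvector:
  assumes b: "is_bias n F lam v"
  obtains w where "\<And>j. j < n \<Longrightarrow> F w j \<le> lam + w j" "\<And>j. j < n \<Longrightarrow> 0 \<le> w j"
    "\<And>j. j < n \<Longrightarrow> w j \<le> eigen_span_bound lam"
proof -
  have "\<forall>j. \<exists>i. j < n \<longrightarrow> i \<in> A_supp j \<and> F v j = max_stage v i - rA i j"
    using shapley_attained by metis
  then obtain \<sigma> where \<sigma>: "\<And>j. j < n \<Longrightarrow> \<sigma> j \<in> A_supp j \<and> F v j = max_stage v (\<sigma> j) - rA (\<sigma> j) j"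
    by metis
  have \<sigma>_lt: "\<sigma> j < m" if "j < n" for j using A_supp_lt \<sigma>[OF that] by blast
  define Act where "Act j = (\<lambda>h. (rA (\<sigma> j) j - rB (\<sigma> j) h + lam, h)) ` B_supp (\<sigma> j)" for j
  interpret min_game n q P Act "real_of_int M" "W + \<bar>lam\<bar>"
  proof
    show "\<bar>c\<bar> \<le> W + \<bar>lam\<bar>" if j: "j < n" and a: "(c, h) \<in> Act j" for j c h
    proof -
      obtain h' where h': "h' \<in> B_supp (\<sigma> j)" "c = rA (\<sigma> j) j - rB (\<sigma> j) h' + lam"
        using a unfolding Act_def by auto
      thus ?thesis using weight_W_ge[OF j _ h'(1)] \<sigma>[OF j] by fastforce
    qed
  qed (use n_pos B_supp_finite B_supp_nonempty \<sigma>_lt P_ge_inverse_M M_pos B_supp_lt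
      in \<open>auto simp: Act_def\<close>)
  have bellman_eq: "bellman x j = Min ((\<lambda>h. rA (\<sigma> j) j - rB (\<sigma> j) h + lam + mat_vec n P x h) ` B_supp (\<sigma> j))"
    for x j unfolding bellman_def Act_def image_image by simp
  have fixpoint: "bellman (\<lambda>l. - v l) j = - v j" if j: "j < n" for j
  proof -
    have "bellman (\<lambda>l. - v l) j
        = Min ((\<lambda>h. - (rB (\<sigma> j) h + mat_vec n P v h) + (rA (\<sigma> j) j + lam)) ` B_supp (\<sigma> j))"
      unfolding bellman_eq mat_vec_uminus by (simp add: algebra_simps)
    also have "\<dots> = - max_stage v (\<sigma> j) + (rA (\<sigma> j) j + lam)"
      unfolding max_stage_def
      using Min_add_commute[OF B_supp_finite B_supp_nonempty[OF \<sigma>_lt[OF j]],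
          of "\<lambda>h. - (rB (\<sigma> j) h + mat_vec n P v h)"]
        minus_Max_eq_Min[of "(\<lambda>h. rB (\<sigma> j) h + mat_vec n P v h) ` B_supp (\<sigma> j)"]
        B_supp_finite B_supp_nonempty[OF \<sigma>_lt[OF j]]
      by (simp add: image_image)
    also have "\<dots> = - v j" using \<sigma>[OF j] b j unfolding is_bias_def by simp
    finally show ?thesis .
  qed
  obtain w where w: "\<And>j. j < n \<Longrightarrow> w j \<le> bellman w j" "\<And>j. j < n \<Longrightarrow> w j \<le> 0"
    "\<And>j. j < n \<Longrightarrow> - (real (n - 1) * (W + \<bar>lam\<bar>) * real_of_int M
      ^ min (card nondet_rows) (n - 1)) \<le> w j"
    using bounded_subsolution_exists[OF fixpoint] by blast
  have "F (\<lambda>l. - w l) j \<le> lam + - w j" if j: "j < n" for j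
  proof -
    have "max_stage (\<lambda>l. - w l) (\<sigma> j) \<le> lam - w j + rA (\<sigma> j) j"
      unfolding max_stage_def
    proof (rule Max.boundedI)
      fix y assume "y \<in> (\<lambda>h. rB (\<sigma> j) h + mat_vec n P (\<lambda>l. - w l) h) ` B_supp (\<sigma> j)"
      then obtain h where h: "h \<in> B_supp (\<sigma> j)" "y = rB (\<sigma> j) h + mat_vec n P (\<lambda>l. - w l) h" by auto
      have "bellman w j \<le> rA (\<sigma> j) j - rB (\<sigma> j) h + lam + mat_vec n P w h"
        using bellman_le[OF j, of "rA (\<sigma> j) j - rB (\<sigma> j) h + lam" h w] h unfolding Act_def by blast
      thus "y \<le> lam - w j + rA (\<sigma> j) j" using w(1)[OF j] h(2) unfolding mat_vec_uminus by linarith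
    qed (use B_supp_finite B_supp_nonempty[OF \<sigma>_lt[OF j]] in auto)
    thus ?thesis using shapley_le[OF j, of "\<sigma> j" "\<lambda>l. - w l"] \<sigma>[OF j] by simp
  qed
  thus thesis using that[of "\<lambda>l. - w l"] w(2,3) unfolding eigen_span_bound_def num_nondet_eq_card
    by (simp add: minus_le_iff)
qed

text \<open>At the bias vector, optimal strategies \<open>\<sigma>\<close> of Min and \<open>\<tau>\<close> of Max give a Markov
  chain \<open>l \<mapsto> \<rho> l = \<tau> (\<sigma> l)\<close> with integer payments \<open>c\<close> whose gain is \<open>lam\<close>.\<close>

lemma bias_policy:
  assumes b: "is_bias n F lam v"
  obtains \<rho> c where "\<And>l. l < n \<Longrightarrow> \<rho> l < q" "\<And>l. l < n \<Longrightarrow> c l \<in> \<int>"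
    "\<And>l. l < n \<Longrightarrow> lam + v l = c l + mat_vec n P v (\<rho> l)"
proof -
  have "\<forall>l. \<exists>i h. l < n \<longrightarrow> i \<in> A_supp l \<and> h \<in> B_supp i \<and> F v l = rB i h + mat_vec n P v h - rA i l"
    using shapley_attained max_stage_attained A_supp_lt by (metis add_diff_eq)
  then obtain \<sigma> \<tau> where st: "\<And>l. l < n \<Longrightarrow> \<sigma> l \<in> A_supp l \<and> \<tau> l \<in> B_supp (\<sigma> l)
      \<and> F v l = rB (\<sigma> l) (\<tau> l) + mat_vec n P v (\<tau> l) - rA (\<sigma> l) l"
    by metis
  show thesis
  proof (rule that[of \<tau> "\<lambda>l. rB (\<sigma> l) (\<tau> l) - rA (\<sigma> l) l"])
    fix l assume l: "l < n"
    show "\<tau> l < q" using st[OF l] B_supp_lt by blast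
    show "rB (\<sigma> l) (\<tau> l) - rA (\<sigma> l) l \<in> \<int>"
      using st[OF l] A_Ints[OF _ l] B_Ints A_supp_lt by (metis Ints_diff)
    show "lam + v l = rB (\<sigma> l) (\<tau> l) - rA (\<sigma> l) l + mat_vec n P v (\<tau> l)"
      using b l st[OF l] unfolding is_bias_def by simp
  qed
qed

lemma abs_bias_eigenvalue_ge:
  assumes b: "is_bias n F lam v" and "lam \<noteq> 0"
  shows "1 / (real n * real_of_int M ^ kappa) \<le> \<bar>lam\<bar>"
proof -
  obtain \<rho> c where \<rho>: "\<And>l. l < n \<Longrightarrow> \<rho> l < q" and c: "\<And>l. l < n \<Longrightarrow> c l \<in> \<int>"
    and policy: "\<And>l. l < n \<Longrightarrow> lam + v l = c l + mat_vec n P v (\<rho> l)"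
    using bias_policy[OF b] by blast
  obtain \<psi> e where mass: "(\<Sum>h<q. \<psi> h) > 0" "(\<Sum>h<q. \<psi> h) \<le> real n"
    and stationary: "\<And>z. z < q \<Longrightarrow> (\<Sum>x<q. \<psi> x * policy_chain \<rho> x z) = \<psi> z"
    and e: "e \<le> kappa" and scaled: "\<And>l. l < n \<Longrightarrow> real_of_int M ^ e * (\<Sum>h<q. \<psi> h * P h l) \<in> \<int>"
    using policy_stationary_vector[where M = M and \<rho> = \<rho>, OF n_pos M_times_P_Ints \<rho>]
    unfolding num_nondet_eq_card by blast
  define D where "D = real_of_int M ^ e * (\<Sum>h<q. \<psi> h)"
  have "lam * D = real_of_int M ^ e * (lam * (\<Sum>h<q. \<psi> h))"
    unfolding D_def by (rule mult.left_commute)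
  also have "\<dots> = real_of_int M ^ e * (\<Sum>l<n. c l * (\<Sum>h<q. \<psi> h * P h l))"
    using stationary_gain_identity[OF \<rho> policy stationary] by (rule arg_cong)
  also have "\<dots> = (\<Sum>l<n. c l * (real_of_int M ^ e * (\<Sum>h<q. \<psi> h * P h l)))"
    unfolding sum_distrib_left by (simp add: ac_simps)
  also have "\<dots> \<in> \<int>" using c scaled by (intro Ints_sum) (simp add: Ints_mult)
  finally have "lam * D \<in> \<int>" .
  moreover have "D > 0" unfolding D_def using mass M_pos by simp
  ultimately have "1 \<le> \<bar>lam\<bar> * D" using \<open>lam \<noteq> 0\<close> Ints_nonzero_abs_ge1 by (fastforce simp: abs_mult)
  moreover have "D \<le> real n * real_of_int M ^ kappa"
  proof -
    have "real_of_int M ^ e \<le> real_of_int M ^ kappa" using e M_pos by (intro power_increasing) auto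
    hence "D \<le> real_of_int M ^ kappa * real n" unfolding D_def using mass M_pos by (intro mult_mono) auto
    thus ?thesis by (simp add: mult.commute)
  qed
  ultimately have "1 \<le> \<bar>lam\<bar> * (real n * real_of_int M ^ kappa)"
    by (meson abs_ge_zero mult_left_mono order_trans)
  thus ?thesis using n_pos M_pos by (simp add: field_simps)
qed

lemma value_iter_ge_subeigenvector:
  assumes sub: "\<And>j. j < n \<Longrightarrow> lam + w j \<le> F w j" and nonpos: "\<And>j. j < n \<Longrightarrow> w j \<le> 0"
    and j: "j < n"
  shows "real k * lam + w j \<le> value_iter F k j"
  using j
proof (induction k arbitrary: j)
  case (Suc k)
  have "real (Suc k) * lam + w j \<le> F w j + real k * lam" using sub[OF Suc.prems] by (simp add: algebra_simps)
  also have "\<dots> = F (\<lambda>l. w l + real k * lam) j" using shapley_add_const[OF Suc.prems] by simp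
  also have "\<dots> \<le> F (value_iter F k) j" using Suc.IH by (intro shapley_mono[OF Suc.prems]) (simp add: add.commute)
  finally show ?case unfolding value_iter_def by simp
qed (use nonpos in \<open>simp add: value_iter_def\<close>)

lemma value_iter_le_supereigenvector:
  assumes super: "\<And>j. j < n \<Longrightarrow> F w j \<le> lam + w j" and nonneg: "\<And>j. j < n \<Longrightarrow> 0 \<le> w j"
    and j: "j < n"
  shows "value_iter F k j \<le> real k * lam + w j"
  using j
proof (induction k arbitrary: j)
  case (Suc k)
  have "value_iter F (Suc k) j \<le> F (\<lambda>l. w l + real k * lam) j"
    using Suc.IH unfolding value_iter_def by (simp add: add.commute shapley_mono[OF Suc.prems])
  also have "\<dots> = F w j + real k * lam" using shapley_add_const[OF Suc.prems] by simp
  also have "\<dots> \<le> real (Suc k) * lam + w j" using super[OF Suc.prems] by (simp add: algebra_simps)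
  finally show ?case .
qed (use nonneg in \<open>simp add: value_iter_def\<close>)

lemma value_iter_stops:
  assumes b: "is_bias n F lam v" and "lam \<noteq> 0"
  obtains l where "\<not> vi_continue n F l" "real l \<le> eigen_span_bound lam / \<bar>lam\<bar> + 1"
proof -
  let ?C = "eigen_span_bound lam" and ?l = "nat \<lfloor>eigen_span_bound lam / \<bar>lam\<bar>\<rfloor> + 1"
  have "?C \<ge> 0" unfolding eigen_span_bound_def using abs_bias_eigenvalue_le_W[OF b] M_pos by simp
  hence "real (nat \<lfloor>?C / \<bar>lam\<bar>\<rfloor>) \<le> ?C / \<bar>lam\<bar>" "?C / \<bar>lam\<bar> < real (nat \<lfloor>?C / \<bar>lam\<bar>\<rfloor>) + 1"
    by (simp_all add: of_nat_floor)
  hence l: "real ?l * \<bar>lam\<bar> > ?C" "real ?l \<le> ?C / \<bar>lam\<bar> + 1"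
    using \<open>lam \<noteq> 0\<close> by (simp_all add: field_simps)
  have nonempty: "{..<n} \<noteq> {}" using n_pos by (auto simp: lessThan_empty_iff)
  show thesis
  proof (cases "lam > 0")
    case True
    obtain w where w: "\<And>j. j < n \<Longrightarrow> lam + w j \<le> F w j" "\<And>j. j < n \<Longrightarrow> w j \<le> 0"
      "\<And>j. j < n \<Longrightarrow> - ?C \<le> w j"
      using bias_subeigenvector[OF b] by blast
    have "value_iter F ?l j > 0" if "j < n" for j
      using value_iter_ge_subeigenvector[OF w(1,2) that, of ?l] w(3)[OF that] l(1) True by simp
    hence "Min (value_iter F ?l ` {..<n}) > 0" using nonempty by (subst Min_gr_iff) auto
    hence "\<not> vi_continue n F ?l" unfolding vi_continue_def by simp
    thus thesis using that l(2) by blast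
  next
    case False
    obtain w where w: "\<And>j. j < n \<Longrightarrow> F w j \<le> lam + w j" "\<And>j. j < n \<Longrightarrow> 0 \<le> w j"
      "\<And>j. j < n \<Longrightarrow> w j \<le> ?C"
      using bias_supereigenvector[OF b] by blast
    have "value_iter F ?l j < 0" if "j < n" for j
      using value_iter_le_supereigenvector[OF w(1,2) that, of ?l] w(3)[OF that] l(1) False \<open>lam \<noteq> 0\<close>
      by simp
    hence "Max (value_iter F ?l ` {..<n}) < 0" using nonempty by (subst Max_less_iff) auto
    hence "\<not> vi_continue n F ?l" unfolding vi_continue_def by simp
    thus thesis using that l(2) by blast
  qed
qed

lemma vi_answer_correct:
  assumes b: "is_bias n F lam v" and stops: "\<not> vi_continue n F l"
  shows "vi_answer_min_wins n F \<longleftrightarrow> lam < 0"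
proof -
  let ?u = "value_iter F (vi_stop n F)"
  have "\<not> vi_continue n F (vi_stop n F)" unfolding vi_stop_def using stops by (rule LeastI)
  show ?thesis
  proof (cases "Max (?u ` {..<n}) < 0")
    case True
    thus ?thesis using ergodic_neg_if_iterate_neg[OF b] unfolding vi_answer_min_wins_def by simp
  next
    case False
    hence "Min (?u ` {..<n}) > 0" using \<open>\<not> vi_continue n F (vi_stop n F)\<close>
      unfolding vi_continue_def by simp
    hence "lam > 0" by (rule ergodic_pos_if_iterate_pos[OF b])
    thus ?thesis using False unfolding vi_answer_min_wins_def by simp
  qed
qed

end

lemma stopping_time_arith:
  fixes n :: nat and W lam K :: real
  assumes n: "n \<ge> 1" and K: "K \<ge> 1" and lam: "lam \<noteq> 0" "\<bar>lam\<bar> \<le> W"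
    and lower: "1 / (real n * K) \<le> \<bar>lam\<bar>"
  shows "real (n - 1) * (W + \<bar>lam\<bar>) * K / \<bar>lam\<bar> + 1 \<le> 10 * real n ^ 3 * W * K ^ 2"
proof -
  have nK: "real n * K \<ge> 1" using n K mult_mono[of 1 "real n" 1 K] by simp
  hence inv: "1 / \<bar>lam\<bar> \<le> real n * K" using lower lam(1) by (simp add: field_simps)
  have "real (n - 1) * (W + \<bar>lam\<bar>) * K / \<bar>lam\<bar> \<le> real (n - 1) * (2 * W) * K * (real n * K)"
  proof -
    have "real (n - 1) * (W + \<bar>lam\<bar>) * K / \<bar>lam\<bar>
        \<le> real (n - 1) * (W + \<bar>lam\<bar>) * K * (real n * K)"
      using inv lam K by (simp add: divide_inverse mult_left_mono)
    also have "\<dots> \<le> real (n - 1) * (2 * W) * K * (real n * K)"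
      using lam(2) K nK by (intro mult_right_mono mult_left_mono) auto
    finally show ?thesis .
  qed
  moreover have "1 \<le> real n * W * K ^ 2"
  proof -
    have "1 \<le> \<bar>lam\<bar> * (real n * K)" using lower nK by (simp add: field_simps)
    also have "\<dots> \<le> W * (real n * K)" using lam(2) nK by (intro mult_right_mono) auto
    also have "\<dots> \<le> W * (real n * K) * K"
      using lam(2) nK K mult_left_mono[of 1 K "W * (real n * K)"] by simp
    finally show ?thesis by (simp add: power2_eq_square ac_simps)
  qed
  moreover have "real (n - 1) * (2 * W) * K * (real n * K) + real n * W * K ^ 2
      \<le> 10 * real n ^ 3 * W * K ^ 2"
  proof -
    have WK: "W * K ^ 2 \<ge> 0" using lam by simp
    have x: "real n \<ge> 1" using n by simp
    have "real n * real n * 1 \<le> real n * real n * real n" using x by (intro mult_left_mono) auto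
    moreover have "2 * real (n - 1) * real n = 2 * (real n * real n) - 2 * real n"
      using n by (simp add: of_nat_diff algebra_simps)
    moreover have "real n ^ 3 = real n * real n * real n" by (rule power3_eq_cube)
    moreover have "real n * real n \<ge> 0" by simp
    ultimately have "2 * real (n - 1) * real n + real n \<le> 10 * real n ^ 3" using x by linarith
    from mult_right_mono[OF this WK] show ?thesis by (simp add: power2_eq_square algebra_simps)
  qed
  ultimately show ?thesis by linarith
qed

theorem mainTheorem11:
  fixes m n q :: nat
    and A B :: "nat \<Rightarrow> nat \<Rightarrow> ereal"
    and P :: "nat \<Rightarrow> nat \<Rightarrow> real"
    and Q :: "nat \<Rightarrow> nat \<Rightarrow> int"
    and M :: int
  assumes n_pos: "n \<ge> 1"
    and A_int: "\<And>i j. i < m \<Longrightarrow> j < n \<Longrightarrow> A i j = -\<infinity> \<or> (\<exists>z::int. A i j = ereal (of_int z))"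
    and B_int: "\<And>i h. i < m \<Longrightarrow> h < q \<Longrightarrow> B i h = -\<infinity> \<or> (\<exists>z::int. B i h = ereal (of_int z))"
    and A_col: "\<And>j. j < n \<Longrightarrow> \<exists>i<m. A i j \<noteq> -\<infinity>"
    and B_row: "\<And>i. i < m \<Longrightarrow> \<exists>h<q. B i h \<noteq> -\<infinity>"
    and P_nonneg: "\<And>i l. i < q \<Longrightarrow> l < n \<Longrightarrow> P i l \<ge> 0"
    and P_stoch: "\<And>i. i < q \<Longrightarrow> (\<Sum>l<n. P i l) = 1"
    and M_pos: "M > 0"
    and P_rat: "\<And>i l. i < q \<Longrightarrow> l < n \<Longrightarrow> P i l = real_of_int (Q i l) / real_of_int M"
    and bias: "has_bias n (shapley m n q A B P)"
    and rho_ne: "ergodic_const n (shapley m n q A B P) \<noteq> 0"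
  shows "(\<exists>l. \<not> vi_continue n (shapley m n q A B P) l)
    \<and> real (vi_stop n (shapley m n q A B P))
        \<le> 10 * real n ^ 3 * weight_W m n q A B
           * real_of_int M ^ (2 * min (num_nondet q n P) (n - 1))
    \<and> (vi_answer_min_wins n (shapley m n q A B P)
        \<longleftrightarrow> ergodic_const n (shapley m n q A B P) < 0)"
proof -
  interpret game n q P m A B Q M
    using n_pos A_int B_int A_col B_row P_nonneg P_stoch M_pos P_rat by unfold_locales auto
  obtain lam v where b: "is_bias n F lam v" using bias unfolding has_bias_def by blast
  have erg: "ergodic_const n F = lam" by (rule ergodic_const_eq[OF b])
  with rho_ne have "lam \<noteq> 0" by simp
  then obtain l where stop: "\<not> vi_continue n F l"
    and l: "real l \<le> eigen_span_bound lam / \<bar>lam\<bar> + 1"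
    by (rule value_iter_stops[OF b])
  have "real (vi_stop n F) \<le> real l" unfolding vi_stop_def using stop by (simp add: Least_le)
  also have "\<dots> \<le> 10 * real n ^ 3 * W * (real_of_int M ^ kappa) ^ 2"
    using l stopping_time_arith[OF n_pos _ \<open>lam \<noteq> 0\<close> abs_bias_eigenvalue_le_W[OF b]
        abs_bias_eigenvalue_ge[OF b \<open>lam \<noteq> 0\<close>]] M_pos
    unfolding eigen_span_bound_def by simp
  also have "(real_of_int M ^ kappa) ^ 2 = real_of_int M ^ (2 * kappa)"
    by (simp add: power_mult[symmetric] mult.commute)
  finally show ?thesis using stop vi_answer_correct[OF b stop] erg by blast
qed

end
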